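(* Let $A$ be a semicircular Klaus–Shaw potential. Then for $0<s<A_{\max}$, $$x_\pm(s)=\frac1\pi\int_0^s\frac{\frac{d}{dm}\Xi(\mathrm im)\,dm}{\sqrt{s^2-m^2}}\mp\frac1\pi\int_s^{A_{\max}}\frac{\frac{d}{dm}\Phi(\mathrm im)\,dm}{\sqrt{m^2-s^2}}.$$
   Context: Let $X_-<X_+$. A semicircular Klaus–Shaw potential is $A:\mathbb R\to[0,\infty)$ such that: $A$ has support $[X_-,X_+]$ and $A(x)=u(x)\sqrt{(X_+-x)(x-X_-)}$ there, where $u\ge c>0$ on $[X_-,X_+]$ and $u$ extends analytically to a complex neighborhood of $[X_-,X_+]$; $A\in L^1\cap C^2(\mathbb R)$ with a unique maximizer $x_0$; $A''(x_0)<0$. $A_{\max}:=A(x_0)$; for $0<s<A_{\max}$, $x_-(s)<x_+(s)$ are the two solutions of $A(x)=s$. Phase integral $\Phi(\mathrm is):=\int_{x_-(s)}^{x_+(s)}\sqrt{A(x)^2-s^2}\,dx$ and tail integral $\Xi(\mathrm is):=(x_+(s)+x_-(s))s+\int_{-\infty}^{x_-(s)}(\sqrt{s^2-A(x)^2}-s)\,dx-\int_{x_+(s)}^{\infty}(\sqrt{s^2-A(x)^2}-s)\,dx$, for $0<s<A_{\max}$. *)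

theory Defs
  imports "HOL-Analysis.Analysis"
begin

definition Amax :: "(real \<Rightarrow> real) \<Rightarrow> real" where
  "Amax A = Sup (range A)"

definition semicircular_KS :: "(real \<Rightarrow> real) \<Rightarrow> real \<Rightarrow> real \<Rightarrow> bool" where
  "semicircular_KS A Xm Xp \<longleftrightarrow>
     Xm < Xp \<and>
     (\<forall>x. A x \<ge> 0) \<and>
     (\<forall>x. x \<notin> {Xm..Xp} \<longrightarrow> A x = 0) \<and>
     (\<exists>u c. c > 0 \<and>
        (\<forall>x\<in>{Xm..Xp}. A x = u x * sqrt ((Xp - x) * (x - Xm)) \<and> u x \<ge> c) \<and>
        (\<exists>g U. open U \<and> complex_of_real ` {Xm..Xp} \<subseteq> U \<and> g holomorphic_on U \<and>
           (\<forall>x\<in>{Xm..Xp}. g (complex_of_real x) = complex_of_real (u x)))) \<and>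
     A absolutely_integrable_on UNIV \<and>
     continuous_on UNIV A \<and>
     (\<forall>x\<in>{Xm<..<Xp}. A differentiable (at x) \<and> deriv A differentiable (at x)) \<and>
     continuous_on {Xm<..<Xp} (deriv (deriv A)) \<and>
     (\<exists>x0. (\<forall>x. x \<noteq> x0 \<longrightarrow> A x < A x0) \<and> deriv (deriv A) x0 < 0) \<and>
     (\<forall>s. 0 < s \<and> s < Amax A \<longrightarrow> card {x. A x = s} = 2)"

definition xminus :: "(real \<Rightarrow> real) \<Rightarrow> real \<Rightarrow> real" where
  "xminus A s = Min {x. A x = s}"

definition xplus :: "(real \<Rightarrow> real) \<Rightarrow> real \<Rightarrow> real" where
  "xplus A s = Max {x. A x = s}"

text \<open>Phase integral, Phi(i s), as a function of the real parameter s.\<close>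
definition Phi :: "(real \<Rightarrow> real) \<Rightarrow> real \<Rightarrow> real" where
  "Phi A s = integral {xminus A s .. xplus A s} (\<lambda>x. sqrt ((A x)\<^sup>2 - s\<^sup>2))"

text \<open>Tail integral, Xi(i s), as a function of the real parameter s.\<close>
definition Xi :: "(real \<Rightarrow> real) \<Rightarrow> real \<Rightarrow> real" where
  "Xi A s = (xplus A s + xminus A s) * s
      + integral {..xminus A s} (\<lambda>x. sqrt (s\<^sup>2 - (A x)\<^sup>2) - s)
      - integral {xplus A s..} (\<lambda>x. sqrt (s\<^sup>2 - (A x)\<^sup>2) - s)"

end

theory Submission
  imports Defs
begin

lemma has_integral_t_div_sqrt_sq_minus_sq:
  fixes m a :: real
  assumes "0 \<le> m" "m < a"
  shows "((\<lambda>t. t / sqrt (a\<^sup>2 - t\<^sup>2)) has_integral sqrt (a\<^sup>2 - m\<^sup>2)) {m..a}"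
proof -
  have "((\<lambda>t. t / sqrt (a\<^sup>2 - t\<^sup>2)) has_integral
          (- sqrt (a\<^sup>2 - a\<^sup>2)) - (- sqrt (a\<^sup>2 - m\<^sup>2))) {m..a}"
  proof (rule fundamental_theorem_of_calculus_interior)
    show "continuous_on {m..a} (\<lambda>t. - sqrt (a\<^sup>2 - t\<^sup>2))" by (intro continuous_intros)
    fix t assume "t \<in> {m<..<a}"
    then have "0 < a\<^sup>2 - t\<^sup>2" using assms by (simp add: power_strict_mono)
    then show "((\<lambda>t. - sqrt (a\<^sup>2 - t\<^sup>2)) has_vector_derivative t / sqrt (a\<^sup>2 - t\<^sup>2)) (at t)"
      unfolding has_real_derivative_iff_has_vector_derivative[symmetric]
      by (auto intro!: derivative_eq_intros simp: field_simps)
  qed (use assms in auto)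
  then show ?thesis by simp
qed

lemma has_integral_t_div_sqrt_sq_minus_sq':
  fixes m a :: real
  assumes "0 \<le> a" "a < m"
  shows "((\<lambda>t. t / sqrt (t\<^sup>2 - a\<^sup>2)) has_integral sqrt (m\<^sup>2 - a\<^sup>2)) {a..m}"
proof -
  have "((\<lambda>t. t / sqrt (t\<^sup>2 - a\<^sup>2)) has_integral sqrt (m\<^sup>2 - a\<^sup>2) - sqrt (a\<^sup>2 - a\<^sup>2)) {a..m}"
  proof (rule fundamental_theorem_of_calculus_interior)
    show "continuous_on {a..m} (\<lambda>t. sqrt (t\<^sup>2 - a\<^sup>2))" by (intro continuous_intros)
    fix t assume "t \<in> {a<..<m}"
    then have "0 < t\<^sup>2 - a\<^sup>2" using assms by (simp add: power_strict_mono)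
    then show "((\<lambda>t. sqrt (t\<^sup>2 - a\<^sup>2)) has_vector_derivative t / sqrt (t\<^sup>2 - a\<^sup>2)) (at t)"
      unfolding has_real_derivative_iff_has_vector_derivative[symmetric]
      by (auto intro!: derivative_eq_intros simp: field_simps)
  qed (use assms in auto)
  then show ?thesis by simp
qed

lemma has_integral_inverse_sqrt_sq_minus_sq:
  fixes s :: real
  assumes "0 < s"
  shows "((\<lambda>m. 1 / sqrt (s\<^sup>2 - m\<^sup>2)) has_integral pi / 2) {0..s}"
proof -
  have "((\<lambda>m. 1 / sqrt (s\<^sup>2 - m\<^sup>2)) has_integral arcsin (s / s) - arcsin (0 / s)) {0..s}"
  proof (rule fundamental_theorem_of_calculus_interior)
    show "continuous_on {0..s} (\<lambda>m. arcsin (m / s))"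
      using assms by (intro continuous_intros) (auto simp: divide_simps)
    fix t assume t: "t \<in> {0<..<s}"
    then have "-1 < t / s" "t / s < 1" "0 < s\<^sup>2 - t\<^sup>2"
      using assms by (auto simp: divide_simps power_strict_mono)
    moreover have "sqrt (1 - (t / s)\<^sup>2) = sqrt (s\<^sup>2 - t\<^sup>2) / s"
      using assms by (simp add: field_simps real_sqrt_divide)
    ultimately show "((\<lambda>m. arcsin (m / s)) has_vector_derivative 1 / sqrt (s\<^sup>2 - t\<^sup>2)) (at t)"
      unfolding has_real_derivative_iff_has_vector_derivative[symmetric] using assms
      by (auto intro!: derivative_eq_intros simp: field_simps)
  qed (use assms in auto)
  then show ?thesis using assms by simp
qed

text \<open>The substitution \<open>q = (2t\<^sup>2 - a\<^sup>2 - b\<^sup>2) / (b\<^sup>2 - a\<^sup>2)\<close> maps \<open>[a, b]\<close> onto \<open>[-1, 1]\<close>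
  and turns the kernel into \<open>dq / (2 sqrt (1 - q\<^sup>2))\<close>.\<close>
lemma has_integral_Abel_kernel:
  fixes a b :: real
  assumes "0 \<le> a" "a < b"
  shows "((\<lambda>t. t / (sqrt (t\<^sup>2 - a\<^sup>2) * sqrt (b\<^sup>2 - t\<^sup>2))) has_integral pi / 2) {a..b}"
proof -
  define D where "D = b\<^sup>2 - a\<^sup>2"
  have D: "D > 0" using assms unfolding D_def by (simp add: power_strict_mono)
  define q where "q t = (2 * t\<^sup>2 - a\<^sup>2 - b\<^sup>2) / D" for t
  have "((\<lambda>t. t / (sqrt (t\<^sup>2 - a\<^sup>2) * sqrt (b\<^sup>2 - t\<^sup>2))) has_integral
          arcsin (q b) / 2 - arcsin (q a) / 2) {a..b}"
  proof (rule fundamental_theorem_of_calculus_interior)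
    have "q t \<in> {-1..1}" if "t \<in> {a..b}" for t
    proof -
      have "a\<^sup>2 \<le> t\<^sup>2" "t\<^sup>2 \<le> b\<^sup>2" using that assms by (auto intro: power_mono)
      then show ?thesis using D unfolding q_def D_def by (auto simp: divide_simps)
    qed
    then show "continuous_on {a..b} (\<lambda>t. arcsin (q t) / 2)"
      unfolding q_def using D by (intro continuous_intros) auto
    fix t assume t: "t \<in> {a<..<b}"
    have p1: "t\<^sup>2 - a\<^sup>2 > 0" and p2: "b\<^sup>2 - t\<^sup>2 > 0"
      using t assms by (simp_all add: power_strict_mono)
    have key: "1 - (q t)\<^sup>2 = (2 * sqrt (t\<^sup>2 - a\<^sup>2) * sqrt (b\<^sup>2 - t\<^sup>2) / D)\<^sup>2"
    proof -
      have "1 - (q t)\<^sup>2 = (D\<^sup>2 - (2 * t\<^sup>2 - a\<^sup>2 - b\<^sup>2)\<^sup>2) / D\<^sup>2"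
        using D unfolding q_def by (simp add: field_simps)
      also have "D\<^sup>2 - (2 * t\<^sup>2 - a\<^sup>2 - b\<^sup>2)\<^sup>2 = 4 * (t\<^sup>2 - a\<^sup>2) * (b\<^sup>2 - t\<^sup>2)"
        unfolding D_def by algebra
      finally show ?thesis using p1 p2 by (simp add: power_mult_distrib power_divide)
    qed
    have sq: "sqrt (1 - (q t)\<^sup>2) = 2 * sqrt (t\<^sup>2 - a\<^sup>2) * sqrt (b\<^sup>2 - t\<^sup>2) / D"
      unfolding key using p1 p2 D by simp
    have "(q t)\<^sup>2 < 1"
      using key p1 p2 D by (smt (verit) divide_pos_pos mult_pos_pos real_sqrt_gt_zero
          zero_less_power)
    then have "-1 < q t" "q t < 1" by (auto simp: abs_square_less_1)
    then show "((\<lambda>t. arcsin (q t) / 2) has_vector_derivative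
                 t / (sqrt (t\<^sup>2 - a\<^sup>2) * sqrt (b\<^sup>2 - t\<^sup>2))) (at t)"
      unfolding has_real_derivative_iff_has_vector_derivative[symmetric] q_def
      using D p1 p2 sq[unfolded q_def]
      by (auto intro!: derivative_eq_intros simp: field_simps)
  qed (use assms in auto)
  moreover have "q b = 1" "q a = -1" using D unfolding q_def D_def by (auto simp: field_simps)
  ultimately show ?thesis by simp
qed

text \<open>\<open>phase_kernel a\<close> and \<open>tail_kernel a\<close> are the \<open>t\<close>-derivatives of \<open>- sqrt (a\<^sup>2 - t\<^sup>2)\<close> on
  \<open>t < a\<close> and of \<open>sqrt (t\<^sup>2 - a\<^sup>2)\<close> on \<open>a < t\<close>, extended by zero.\<close>
definition phase_kernel :: "real \<Rightarrow> real \<Rightarrow> real" where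
  "phase_kernel a t = (if t < a then t / sqrt (a\<^sup>2 - t\<^sup>2) else 0)"

definition tail_kernel :: "real \<Rightarrow> real \<Rightarrow> real" where
  "tail_kernel a t = (if a < t then t / sqrt (t\<^sup>2 - a\<^sup>2) else 0)"

lemma borel_measurable_phase_kernel[measurable (raw)]:
  assumes [measurable]: "f \<in> borel_measurable M" "g \<in> borel_measurable M"
  shows "(\<lambda>p. phase_kernel (f p) (g p)) \<in> borel_measurable M"
  unfolding phase_kernel_def by measurable

lemma borel_measurable_tail_kernel[measurable (raw)]:
  assumes [measurable]: "f \<in> borel_measurable M" "g \<in> borel_measurable M"
  shows "(\<lambda>p. tail_kernel (f p) (g p)) \<in> borel_measurable M"
  unfolding tail_kernel_def by measurable

lemma phase_kernel_nonneg: "0 \<le> t \<Longrightarrow> 0 \<le> phase_kernel a t"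
  by (auto simp: phase_kernel_def power_mono)

lemma tail_kernel_nonneg: "0 \<le> a \<Longrightarrow> 0 \<le> t \<Longrightarrow> 0 \<le> tail_kernel a t"
  by (auto simp: tail_kernel_def power_mono)

lemma has_integral_zero_extension:
  fixes f :: "real \<Rightarrow> real"
  assumes "(f has_integral I) {a..b}" "a \<le> b" "b \<le> c" "\<And>t. t \<in> {b..c} \<Longrightarrow> f t = 0"
  shows "(f has_integral I) {a..c}"
  using has_integral_combine[OF assms(2,3) assms(1) has_integral_is_0[of "{b..c}" f]] assms(4)
  by simp

lemma has_integral_zero_extension':
  fixes f :: "real \<Rightarrow> real"
  assumes "(f has_integral I) {b..c}" "a \<le> b" "b \<le> c" "\<And>t. t \<in> {a..b} \<Longrightarrow> f t = 0"
  shows "(f has_integral I) {a..c}"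
  using has_integral_combine[OF assms(2,3) has_integral_is_0[of "{a..b}" f] assms(1)] assms(4)
  by simp

lemma has_integral_phase_kernel:
  assumes "0 \<le> m" "0 \<le> a" "a \<le> M"
  shows "(phase_kernel a has_integral sqrt (max 0 (a\<^sup>2 - m\<^sup>2))) {m..M}"
proof (cases "m < a")
  case True
  have "(phase_kernel a has_integral sqrt (a\<^sup>2 - m\<^sup>2)) {m..a}"
    by (rule has_integral_spike_finite[of "{a}", OF _ _ has_integral_t_div_sqrt_sq_minus_sq[OF assms(1) True]]) (auto simp: phase_kernel_def)
  then have "(phase_kernel a has_integral sqrt (a\<^sup>2 - m\<^sup>2)) {m..M}"
    by (rule has_integral_zero_extension) (use True assms in \<open>auto simp: phase_kernel_def\<close>)
  then show ?thesis using True assms by (simp add: power_mono max_def)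
next
  case False
  have "(phase_kernel a has_integral 0) {m..M}"
    by (rule has_integral_is_0) (use False in \<open>auto simp: phase_kernel_def\<close>)
  moreover have "max 0 (a\<^sup>2 - m\<^sup>2) = 0" using False assms by (simp add: power_mono)
  ultimately show ?thesis by simp
qed

lemma has_integral_tail_kernel:
  assumes "0 < m" "0 \<le> a"
  shows "(tail_kernel a has_integral sqrt (max 0 (m\<^sup>2 - a\<^sup>2))) {0..m}"
proof (cases "a < m")
  case True
  have "(tail_kernel a has_integral sqrt (m\<^sup>2 - a\<^sup>2)) {a..m}"
    by (rule has_integral_spike_finite[of "{a}", OF _ _ has_integral_t_div_sqrt_sq_minus_sq'[OF assms(2) True]]) (auto simp: tail_kernel_def)
  then have "(tail_kernel a has_integral sqrt (m\<^sup>2 - a\<^sup>2)) {0..m}"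
    by (rule has_integral_zero_extension') (use True assms in \<open>auto simp: tail_kernel_def\<close>)
  then show ?thesis using True assms by (simp add: power_mono max_def)
next
  case False
  have "(tail_kernel a has_integral 0) {0..m}"
    by (rule has_integral_is_0) (use False in \<open>auto simp: tail_kernel_def\<close>)
  moreover have "max 0 (m\<^sup>2 - a\<^sup>2) = 0" using False assms by (simp add: power_mono)
  ultimately show ?thesis by simp
qed

lemma has_integral_phase_kernel_Abel:
  assumes "0 \<le> s" "a \<le> M"
  shows "((\<lambda>m. phase_kernel a m / sqrt (m\<^sup>2 - s\<^sup>2)) has_integral (if s < a then pi / 2 else 0)) {s..M}"
proof (cases "s < a")
  case True
  have "((\<lambda>m. phase_kernel a m / sqrt (m\<^sup>2 - s\<^sup>2)) has_integral pi / 2) {s..a}"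
    by (rule has_integral_spike_finite[of "{a}", OF _ _ has_integral_Abel_kernel[OF assms(1) True]])
       (auto simp: phase_kernel_def divide_divide_eq_left mult.commute)
  then have "((\<lambda>m. phase_kernel a m / sqrt (m\<^sup>2 - s\<^sup>2)) has_integral pi / 2) {s..M}"
    by (rule has_integral_zero_extension) (use True assms in \<open>auto simp: phase_kernel_def\<close>)
  then show ?thesis using True by simp
next
  case False
  then show ?thesis by (simp, intro has_integral_is_0) (auto simp: phase_kernel_def)
qed

lemma has_integral_tail_kernel_Abel:
  assumes "0 \<le> a" "0 < s"
  shows "((\<lambda>m. tail_kernel a m / sqrt (s\<^sup>2 - m\<^sup>2)) has_integral (if a < s then pi / 2 else 0)) {0..s}"
proof (cases "a < s")
  case True
  have "((\<lambda>m. tail_kernel a m / sqrt (s\<^sup>2 - m\<^sup>2)) has_integral pi / 2) {a..s}"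
    by (rule has_integral_spike_finite[of "{a}", OF _ _ has_integral_Abel_kernel[OF assms(1) True]])
       (auto simp: tail_kernel_def divide_divide_eq_left)
  then have "((\<lambda>m. tail_kernel a m / sqrt (s\<^sup>2 - m\<^sup>2)) has_integral pi / 2) {0..s}"
    by (rule has_integral_zero_extension') (use True assms in \<open>auto simp: tail_kernel_def\<close>)
  then show ?thesis using True by simp
next
  case False
  then show ?thesis by (simp, intro has_integral_is_0) (auto simp: tail_kernel_def)
qed

lemma nn_integral_lborel_swap:
  fixes f :: "real \<Rightarrow> real \<Rightarrow> ennreal"
  assumes "(\<lambda>(x, t). f x t) \<in> borel_measurable (lborel \<Otimes>\<^sub>M lborel)"
  shows "(\<integral>\<^sup>+x. \<integral>\<^sup>+t. f x t \<partial>lborel \<partial>lborel) = (\<integral>\<^sup>+t. \<integral>\<^sup>+x. f x t \<partial>lborel \<partial>lborel)"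
proof -
  have "pair_sigma_finite lborel lborel"
    by (intro pair_sigma_finite.intro lborel.sigma_finite_measure_axioms)
  from pair_sigma_finite.Fubini'[OF this assms] show ?thesis by (rule sym)
qed

lemma enn2real_nn_integral_eq:
  fixes f :: "real \<Rightarrow> real"
  assumes "f \<in> borel_measurable borel" "\<And>x. 0 \<le> f x" "(f has_integral I) S"
    and "\<And>x. x \<notin> S \<Longrightarrow> f x = 0"
  shows "enn2real (\<integral>\<^sup>+x. f x \<partial>lborel) = I"
proof -
  have I: "(f has_integral I) UNIV"
    using assms(3,4) by (rule has_integral_on_superset) auto
  have "(\<integral>\<^sup>+x. f x \<partial>lborel) = I"
    by (rule nn_integral_has_integral_lborel[OF assms(1,2) I])
  moreover have "0 \<le> I"
    by (rule has_integral_nonneg[OF I assms(2)])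
  ultimately show ?thesis by simp
qed

text \<open>Tonelli's theorem for a nonnegative kernel \<open>f x t\<close>, phrased with Henstock--Kurzweil integrals:
  integrating first over \<open>t \<in> T\<close> and then over \<open>x\<close> gives the integral over \<open>T\<close> of
  \<open>t \<mapsto> \<integral> f x t dx\<close> (which may be infinite only on a null set).\<close>
lemma has_integral_swap_nonneg:
  fixes f :: "real \<Rightarrow> real \<Rightarrow> real"
  assumes meas: "(\<lambda>(x, t). f x t) \<in> borel_measurable (lborel \<Otimes>\<^sub>M lborel)"
    and T[measurable]: "T \<in> sets borel"
    and nonneg: "\<And>x t. t \<in> T \<Longrightarrow> 0 \<le> f x t"
    and inner: "\<And>x. ((\<lambda>t. f x t) has_integral g x) T"
    and outer: "(g has_integral I) UNIV"
  shows "((\<lambda>t. enn2real (\<integral>\<^sup>+x. f x t \<partial>lborel)) has_integral I) T"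
proof -
  define F where "F t = (\<integral>\<^sup>+x. f x t \<partial>lborel)" for t
  have "F \<in> borel_measurable lborel"
  proof -
    have "(\<lambda>(t, x). f x t) \<in> borel_measurable (lborel \<Otimes>\<^sub>M lborel)"
      using measurable_pair_swap[OF meas] by simp
    then have "(\<lambda>(t, x). ennreal (f x t)) \<in> borel_measurable (lborel \<Otimes>\<^sub>M lborel)"
      using measurable_compose[OF _ measurable_ennreal] by (simp add: case_prod_beta')
    then show ?thesis unfolding F_def by (rule lborel.borel_measurable_nn_integral)
  qed
  then have [measurable]: "F \<in> borel_measurable borel" by simp
  have "(\<lambda>p. indicator T (snd p) * (\<lambda>(x, t). f x t) p) \<in> borel_measurable (lborel \<Otimes>\<^sub>M lborel)"
    using meas by measurable
  then have meas_T: "(\<lambda>(x, t). ennreal (indicator T t * f x t)) \<in> borel_measurable (lborel \<Otimes>\<^sub>M lborel)"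
    using measurable_compose[OF _ measurable_ennreal] by (simp add: case_prod_beta')
  have g_nonneg: "0 \<le> g x" for x
    using has_integral_nonneg[OF inner] nonneg by blast
  have I_nonneg: "0 \<le> I"
    using has_integral_nonneg[OF outer] g_nonneg by blast
  have "(\<integral>\<^sup>+t. indicator T t * F t \<partial>lborel) = (\<integral>\<^sup>+t. \<integral>\<^sup>+x. indicator T t * f x t \<partial>lborel \<partial>lborel)"
    unfolding F_def by (intro nn_integral_cong) (auto simp: indicator_def)
  also have "\<dots> = (\<integral>\<^sup>+x. \<integral>\<^sup>+t. indicator T t * f x t \<partial>lborel \<partial>lborel)"
    by (rule nn_integral_lborel_swap[OF meas_T, symmetric])
  also have "\<dots> = (\<integral>\<^sup>+x. g x \<partial>lborel)"
    using nn_integral_has_integral_lebesgue[OF nonneg inner] by simp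
  also have "\<dots> = I"
    using nn_integral_has_integral_lebesgue[OF _ outer] g_nonneg by simp
  finally have int_F: "(\<integral>\<^sup>+t. indicator T t * F t \<partial>lborel) = I" .
  have "AE t in lborel. indicator T t * F t \<noteq> \<infinity>"
    by (rule nn_integral_PInf_AE) (simp_all add: int_F ennreal_neq_top)
  then have "AE t in lborel. ennreal (indicator T t * enn2real (F t)) = indicator T t * F t"
    by eventually_elim (auto simp: indicator_def ennreal_enn2real_if)
  then have "(\<integral>\<^sup>+t. indicator T t * enn2real (F t) \<partial>lborel) = (\<integral>\<^sup>+t. indicator T t * F t \<partial>lborel)"
    by (rule nn_integral_cong_AE)
  then have "(\<integral>\<^sup>+t. indicator T t * enn2real (F t) \<partial>lborel) = I"
    using int_F by simp
  moreover have "(\<lambda>t. indicator T t * enn2real (F t)) \<in> borel_measurable borel"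
    by measurable
  ultimately have "((\<lambda>t. indicator T t * enn2real (F t)) has_integral I) UNIV"
    by (intro nn_integral_has_integral I_nonneg) (auto simp: enn2real_nonneg)
  moreover have "(\<lambda>t. indicator T t * enn2real (F t)) = (\<lambda>t. if t \<in> T then enn2real (F t) else 0)"
    by (auto simp: indicator_def)
  ultimately show ?thesis
    unfolding F_def by (simp add: has_integral_restrict_UNIV)
qed

text \<open>A change of variables \<open>y = g x\<close> that kills the integrand: the image of the zero set of
  the derivative of an injective map is negligible.\<close>
lemma negligible_image_zero_derivative:
  fixes g g' :: "real \<Rightarrow> real"
  assumes S: "S \<in> sets lebesgue"
    and der: "\<And>x. x \<in> S \<Longrightarrow> (g has_real_derivative g' x) (at x within S)"
    and inj: "inj_on g S" and C: "C \<subseteq> S" "\<And>x. x \<in> C \<Longrightarrow> g' x = 0"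
  shows "negligible (g ` C)"
proof -
  have zero: "\<bar>g' x\<bar> * indicator (g ` C) (g x) = 0" if x: "x \<in> S" for x
  proof (cases "g x \<in> g ` C")
    case True
    then obtain z where "z \<in> C" "g x = g z" by auto
    then have "x = z" using inj x C by (meson inj_onD subsetD)
    then show ?thesis using C \<open>z \<in> C\<close> by simp
  qed simp
  have "((\<lambda>x. \<bar>g' x\<bar> * indicator (g ` C) (g x)) has_integral 0) S"
    "((\<lambda>x. norm (\<bar>g' x\<bar> * indicator (g ` C) (g x))) has_integral 0) S"
    using zero by (auto intro: has_integral_is_0)
  then have "(\<lambda>x. \<bar>g' x\<bar> * indicator (g ` C) (g x)) absolutely_integrable_on S \<and>
      integral S (\<lambda>x. \<bar>g' x\<bar> * indicator (g ` C) (g x)) = 0"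
    unfolding absolutely_integrable_on_def by (auto simp: integral_unique)
  then have "(indicator (g ` C) :: real \<Rightarrow> real) absolutely_integrable_on g ` S \<and>
      integral (g ` S) (indicator (g ` C) :: real \<Rightarrow> real) = 0"
    using has_absolute_integral_change_of_variables_1'[OF S der inj] by blast
  then have "((indicator (g ` C) :: real \<Rightarrow> real) has_integral 0) (g ` S)"
    by (metis absolutely_integrable_on_def has_integral_integrable_integral)
  then have "((\<lambda>x. if x \<in> g ` S then (indicator (g ` C) x :: real) else 0) has_integral 0) UNIV"
    by (simp only: has_integral_restrict_UNIV)
  moreover have "(\<lambda>x. if x \<in> g ` S then (indicator (g ` C) x :: real) else 0) = indicator (g ` C)"
    using C by (auto simp: fun_eq_iff indicator_def)
  ultimately show ?thesis by (simp add: negligible_UNIV)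
qed

lemma isCont_pos_interval:
  fixes f :: "real \<Rightarrow> real"
  assumes "isCont f a" "0 < f a" "L < a" "a < R"
  obtains c d where "L < c" "c < a" "a < d" "d < R" "\<And>x. x \<in> {c..d} \<Longrightarrow> 0 < f x"
proof -
  have "eventually (\<lambda>y. 0 < f y) (nhds a)"
    using assms(1,2) by (simp add: isCont_def tendsto_at_iff_tendsto_nhds order_tendstoD)
  then obtain e where e: "0 < e" "\<And>y. dist y a < e \<Longrightarrow> 0 < f y"
    unfolding eventually_nhds_metric by blast
  define h where "h = min (e / 2) (min ((a - L) / 2) ((R - a) / 2))"
  have h: "0 < h" "h \<le> e / 2" "h \<le> (a - L) / 2" "h \<le> (R - a) / 2"
    using e assms(3,4) by (simp_all add: h_def min_def)
  have "h < e" "L < a - h" "a + h < R"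
    using h e(1) assms(3,4) by auto
  with h(1) show ?thesis
    by (intro that[of "a - h" "a + h"]) (auto intro!: e(2) simp: dist_real_def abs_le_iff)
qed

lemma DERIV_nonneg_if_increasing_right:
  fixes f :: "real \<Rightarrow> real"
  assumes "(f has_real_derivative D) (at a)" "a < b" "\<And>y. a < y \<Longrightarrow> y \<le> b \<Longrightarrow> f a < f y"
  shows "0 \<le> D"
proof (rule ccontr)
  assume "\<not> 0 \<le> D"
  then obtain e where "0 < e" "\<And>h. 0 < h \<Longrightarrow> h < e \<Longrightarrow> f (a + h) < f a"
    using DERIV_neg_dec_right[OF assms(1)] by (metis not_le)
  moreover define h where "h = min (e / 2) (b - a)"
  ultimately show False
    using assms(2) assms(3)[of "a + h"] by (smt (verit) field_sum_of_halves)
qed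

lemma strict_mono_on_continuous_image_Ioo:
  fixes g :: "real \<Rightarrow> real"
  assumes "a \<le> b" "continuous_on {a..b} g" "strict_mono_on {a..b} g"
  shows "g ` {a<..<b} = {g a<..<g b}"
proof
  show "g ` {a<..<b} \<subseteq> {g a<..<g b}"
    using assms(3) by (auto simp: strict_mono_on_def)
  show "{g a<..<g b} \<subseteq> g ` {a<..<b}"
  proof
    fix y assume y: "y \<in> {g a<..<g b}"
    then obtain x where "x \<in> {a..b}" "g x = y"
      using IVT'[of g a y b] assms(1,2) by auto
    moreover have "x \<noteq> a" "x \<noteq> b" using y \<open>g x = y\<close> by auto
    ultimately show "y \<in> g ` {a<..<b}" by auto
  qed
qed

lemma has_integral_substitution_unit_interval:
  fixes g g' f h :: "real \<Rightarrow> real"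
  assumes der: "\<And>x. x \<in> {a<..<b} \<Longrightarrow> (g has_real_derivative g' x) (at x)"
    and inj: "inj_on g {a<..<b}" and img: "g ` {a<..<b} = {0<..<1}"
    and f: "continuous_on {0..1} f"
    and eq: "\<And>x. x \<in> {a<..<b} \<Longrightarrow> \<bar>g' x\<bar> * f (g x) = h x"
  shows "(h has_integral integral {0..1} f) {a..b}"
proof -
  have abs: "f absolutely_integrable_on {0<..<1}"
    using absolutely_integrable_continuous_real[OF f] absolutely_integrable_on_Icc_iff_Ioo by blast
  have "(f has_integral integral {0..1} f) {0<..<1}"
    using integrable_integral[OF integrable_continuous_real[OF f]]
    by (simp only: has_integral_Icc_iff_Ioo)
  then have int: "integral {0<..<1} f = integral {0..1} f"
    by (rule integral_unique)
  have der': "(g has_real_derivative g' x) (at x within {a<..<b})" if "x \<in> {a<..<b}" for x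
    using der[OF that] by (rule has_field_derivative_at_within)
  have "{a<..<b} \<in> sets lebesgue" by simp
  from has_absolute_integral_change_of_variables_1'[OF this der' inj, of f "integral {0..1} f"]
  have "(\<lambda>x. \<bar>g' x\<bar> * f (g x)) absolutely_integrable_on {a<..<b} \<and>
      integral {a<..<b} (\<lambda>x. \<bar>g' x\<bar> * f (g x)) = integral {0..1} f"
    unfolding img using abs int by simp
  then have "((\<lambda>x. \<bar>g' x\<bar> * f (g x)) has_integral integral {0..1} f) {a<..<b}"
    by (metis absolutely_integrable_on_def has_integral_integrable_integral)
  then have "(h has_integral integral {0..1} f) {a<..<b}"
    using eq by (metis (no_types, lifting) has_integral_cong)
  then show ?thesis by (simp add: has_integral_Icc_iff_Ioo)
qed

lemma continuous_on_integral_param: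
  fixes h :: "real \<Rightarrow> real \<Rightarrow> real"
  assumes "continuous_on (S \<times> {u..v}) (\<lambda>(t, x). h t x)"
  shows "continuous_on S (\<lambda>t. integral {u..v} (h t))"
    and "\<And>t. t \<in> S \<Longrightarrow> (h t has_integral integral {u..v} (h t)) {u..v}"
proof -
  show "continuous_on S (\<lambda>t. integral {u..v} (h t))"
    using integral_continuous_on_param[of S u v h] assms by simp
  fix t assume "t \<in> S"
  then have "continuous_on {u..v} (\<lambda>x. (\<lambda>(t, x). h t x) (t, x))"
    by (intro continuous_on_compose2[OF assms] continuous_intros) auto
  then show "(h t has_integral integral {u..v} (h t)) {u..v}"
    by (simp add: integrable_continuous_real integrable_integral)
qed

text \<open>Near the level \<open>t\<close> the integrands \<open>t / sqrt (F\<^sup>2 - t\<^sup>2)\<close> and \<open>t / sqrt (t\<^sup>2 - F\<^sup>2)\<close> have an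
  inverse square root singularity at \<open>B t\<close>; the substitution \<open>u = sqrt \<bar>F\<^sup>2 - t\<^sup>2\<bar> / sqrt \<bar>e\<^sup>2 - t\<^sup>2\<bar>\<close>,
  with \<open>e\<close> the value of \<open>F\<close> at the other end, turns them into the integral over \<open>[0, 1]\<close> of the
  bounded integrand \<open>branch_integrand e t\<close>, which depends continuously on \<open>t\<close>.\<close>
locale increasing_branch =
  fixes F F' :: "real \<Rightarrow> real" and c d :: real
  assumes c_less_d: "c < d"
    and F_deriv: "\<And>x. x \<in> {c..d} \<Longrightarrow> (F has_real_derivative F' x) (at x)"
    and F'_cont: "continuous_on {c..d} F'"
    and F'_pos: "\<And>x. x \<in> {c..d} \<Longrightarrow> 0 < F' x"
    and F_c_pos: "0 < F c"
begin

definition B where "B = the_inv_into {c..d} F"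

definition branch_integrand :: "real \<Rightarrow> real \<Rightarrow> real \<Rightarrow> real" where
  "branch_integrand e t u = (let y = sqrt (t\<^sup>2 + (e\<^sup>2 - t\<^sup>2) * u\<^sup>2) in
     t * sqrt \<bar>e\<^sup>2 - t\<^sup>2\<bar> / (y * F' (B y)))"

lemma F_cont: "continuous_on {c..d} F"
proof (intro continuous_at_imp_continuous_on ballI)
  fix x assume "x \<in> {c..d}"
  then show "isCont F x" using DERIV_isCont F_deriv by blast
qed

lemma F_strict_mono: "strict_mono_on {c..d} F"
proof (rule strict_mono_onI)
  fix x y assume "x \<in> {c..d}" "y \<in> {c..d}" "x < y"
  then show "F x < F y"
  proof (intro DERIV_pos_imp_increasing[OF \<open>x < y\<close>])
    fix z assume "x \<le> z" "z \<le> y"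
    then have "z \<in> {c..d}" using \<open>x \<in> {c..d}\<close> \<open>y \<in> {c..d}\<close> by auto
    then show "\<exists>D. (F has_real_derivative D) (at z) \<and> 0 < D" using F_deriv F'_pos by blast
  qed
qed

lemma F_less_iff: "x \<in> {c..d} \<Longrightarrow> y \<in> {c..d} \<Longrightarrow> F x < F y \<longleftrightarrow> x < y"
  using F_strict_mono by (metis linorder_neq_iff order_less_asym strict_mono_onD)

lemma F_le_iff: "x \<in> {c..d} \<Longrightarrow> y \<in> {c..d} \<Longrightarrow> F x \<le> F y \<longleftrightarrow> x \<le> y"
  using F_less_iff by (meson not_less)

lemma F_inj: "inj_on F {c..d}"
  using F_strict_mono by (rule strict_mono_on_imp_inj_on)

lemma F_image: "F ` {c..d} = {F c..F d}"
proof
  show "F ` {c..d} \<subseteq> {F c..F d}" using F_le_iff c_less_d by auto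
  show "{F c..F d} \<subseteq> F ` {c..d}"
    using IVT'[of F c _ d] F_cont c_less_d by fastforce
qed

lemma F_pos: "x \<in> {c..d} \<Longrightarrow> 0 < F x"
  using F_le_iff[of c x] F_c_pos by force

lemma B_in: "y \<in> {F c..F d} \<Longrightarrow> B y \<in> {c..d}"
  unfolding B_def using F_image F_inj by (metis the_inv_into_into order_refl)

lemma F_B: "y \<in> {F c..F d} \<Longrightarrow> F (B y) = y"
  unfolding B_def using F_image F_inj by (metis f_the_inv_into_f)

lemma B_F: "x \<in> {c..d} \<Longrightarrow> B (F x) = x"
  unfolding B_def using F_inj by (rule the_inv_into_f_f)

lemma B_cont: "continuous_on {F c..F d} B"
  unfolding B_def using continuous_on_inv_into[OF F_cont compact_Icc F_inj] F_image by simp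

lemma B_in_open: "y \<in> {F c<..<F d} \<Longrightarrow> B y \<in> {c<..<d}"
  using B_in[of y] F_B[of y] by (fastforce simp: order.order_iff_strict)

lemma less_B_iff: "y \<in> {F c..F d} \<Longrightarrow> x \<in> {c..d} \<Longrightarrow> x < B y \<longleftrightarrow> F x < y"
  using F_less_iff[of x "B y"] B_in F_B by auto

lemma B_less_iff: "y \<in> {F c..F d} \<Longrightarrow> x \<in> {c..d} \<Longrightarrow> B y < x \<longleftrightarrow> y < F x"
  using F_less_iff[of "B y" x] B_in F_B by auto

text \<open>\<open>t\<^sup>2 + (e\<^sup>2 - t\<^sup>2) u\<^sup>2\<close> is a convex combination of \<open>t\<^sup>2\<close> and \<open>e\<^sup>2\<close>, so the square root
  stays between \<open>t\<close> and \<open>e\<close>, i.e. in the range of \<open>F\<close>.\<close>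
lemma sqrt_convex_square_between:
  fixes t e u :: real
  assumes "0 \<le> t" "0 \<le> e" "u \<in> {0..1}"
  shows "min t e \<le> sqrt (t\<^sup>2 + (e\<^sup>2 - t\<^sup>2) * u\<^sup>2)" "sqrt (t\<^sup>2 + (e\<^sup>2 - t\<^sup>2) * u\<^sup>2) \<le> max t e"
proof -
  define w where "w = u\<^sup>2"
  have w: "0 \<le> w" "w \<le> 1" using assms(3) by (auto simp: w_def power_le_one)
  have eq: "t\<^sup>2 + (e\<^sup>2 - t\<^sup>2) * u\<^sup>2 = (1 - w) * t\<^sup>2 + w * e\<^sup>2"
    by (simp add: w_def algebra_simps)
  have "(min t e)\<^sup>2 \<le> t\<^sup>2" "(min t e)\<^sup>2 \<le> e\<^sup>2" "t\<^sup>2 \<le> (max t e)\<^sup>2" "e\<^sup>2 \<le> (max t e)\<^sup>2"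
    using assms(1,2) by (auto intro: power_mono)
  then have "(1 - w) * (min t e)\<^sup>2 + w * (min t e)\<^sup>2 \<le> (1 - w) * t\<^sup>2 + w * e\<^sup>2"
    "(1 - w) * t\<^sup>2 + w * e\<^sup>2 \<le> (1 - w) * (max t e)\<^sup>2 + w * (max t e)\<^sup>2"
    using w by (intro add_mono mult_left_mono; simp)+
  then have lo: "(min t e)\<^sup>2 \<le> t\<^sup>2 + (e\<^sup>2 - t\<^sup>2) * u\<^sup>2"
    and hi: "t\<^sup>2 + (e\<^sup>2 - t\<^sup>2) * u\<^sup>2 \<le> (max t e)\<^sup>2"
    unfolding eq by (simp_all add: algebra_simps)
  show "min t e \<le> sqrt (t\<^sup>2 + (e\<^sup>2 - t\<^sup>2) * u\<^sup>2)"
    using real_le_rsqrt[OF lo] .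
  show "sqrt (t\<^sup>2 + (e\<^sup>2 - t\<^sup>2) * u\<^sup>2) \<le> max t e"
    using real_sqrt_le_mono[OF hi] assms(1,2) by simp
qed

lemma branch_integrand_cont:
  assumes "e \<in> {F c, F d}"
  shows "continuous_on ({F c<..<F d} \<times> {0..1}) (\<lambda>(t, u). branch_integrand e t u)"
proof -
  define Y where "Y p = sqrt ((fst p)\<^sup>2 + (e\<^sup>2 - (fst p)\<^sup>2) * (snd p)\<^sup>2)" for p :: "real \<times> real"
  have Y_range: "Y p \<in> {F c..F d}" if "p \<in> {F c<..<F d} \<times> {0..1}" for p
    using sqrt_convex_square_between[of "fst p" e "snd p"] that assms F_c_pos
    unfolding Y_def by (force simp: min_def max_def)
  have Y_cont: "continuous_on ({F c<..<F d} \<times> {0..1}) Y"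
    unfolding Y_def by (intro continuous_intros)
  have "continuous_on ({F c..F d}) (\<lambda>y. F' (B y))"
    using B_in by (intro continuous_on_compose2[OF F'_cont B_cont]) auto
  then have F'BY_cont: "continuous_on ({F c<..<F d} \<times> {0..1}) (\<lambda>p. F' (B (Y p)))"
    using Y_range by (intro continuous_on_compose2[OF _ Y_cont]) auto
  have "Y p * F' (B (Y p)) \<noteq> 0" if "p \<in> {F c<..<F d} \<times> {0..1}" for p
    using Y_range[OF that] F_c_pos F'_pos[OF B_in[OF Y_range[OF that]]] by auto
  then have "continuous_on ({F c<..<F d} \<times> {0..1})
      (\<lambda>p. fst p * sqrt \<bar>e\<^sup>2 - (fst p)\<^sup>2\<bar> / (Y p * F' (B (Y p))))"
    by (intro continuous_intros Y_cont F'BY_cont) auto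
  then show ?thesis
    by (simp add: branch_integrand_def Y_def case_prod_unfold Let_def)
qed

end

lemma strict_antimono_on_continuous_image_Ioo:
  fixes g :: "real \<Rightarrow> real"
  assumes "a \<le> b" "continuous_on {a..b} g" "strict_antimono_on {a..b} g"
  shows "g ` {a<..<b} = {g b<..<g a}"
proof
  show "g ` {a<..<b} \<subseteq> {g b<..<g a}"
    using assms(3) by (auto simp: monotone_on_def)
  show "{g b<..<g a} \<subseteq> g ` {a<..<b}"
  proof
    fix y assume y: "y \<in> {g b<..<g a}"
    then obtain x where "x \<in> {a..b}" "g x = y"
      using IVT2'[of g b y a] assms(1,2) by auto
    moreover have "x \<noteq> a" "x \<noteq> b" using y \<open>g x = y\<close> by auto
    ultimately show "y \<in> g ` {a<..<b}" by auto
  qed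
qed

lemma continuous_on_slice:
  assumes "continuous_on (S \<times> T) (\<lambda>(t, u). f t u)" "t \<in> S"
  shows "continuous_on T (f t)"
proof -
  have "continuous_on T (\<lambda>u. (\<lambda>(t, u). f t u) (Pair t u))"
    by (rule continuous_on_compose2[OF assms(1)]) (use assms(2) in \<open>auto intro: continuous_intros\<close>)
  then show ?thesis by simp
qed

context increasing_branch
begin

lemma upper_piece_has_integral:
  assumes t: "t \<in> {F c<..<F d}"
  shows "((\<lambda>x. t / sqrt ((F x)\<^sup>2 - t\<^sup>2)) has_integral integral {0..1} (branch_integrand (F d) t))
           {B t..d}"
proof -
  have t_pos: "0 < t" using t F_c_pos by auto
  have Bt: "B t \<in> {c..d}" "F (B t) = t" using B_in F_B t by auto
  define R where "R = sqrt ((F d)\<^sup>2 - t\<^sup>2)"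
  have "t\<^sup>2 < (F d)\<^sup>2" using t t_pos by (simp add: power_strict_mono)
  then have R: "0 < R" "R\<^sup>2 = (F d)\<^sup>2 - t\<^sup>2" "sqrt \<bar>(F d)\<^sup>2 - t\<^sup>2\<bar> = R" unfolding R_def by auto
  have in_cd: "x \<in> {c..d}" if "x \<in> {B t..d}" for x using that Bt by auto
  have F_ge: "t \<le> F x" if "x \<in> {B t..d}" for x
    using that F_le_iff[of "B t" x] Bt in_cd by auto
  have F_gt: "t < F x" if "x \<in> {B t<..<d}" for x
    using that B_less_iff[of t x] t in_cd by auto
  define g where "g x = sqrt ((F x)\<^sup>2 - t\<^sup>2) / R" for x
  define g' where "g' x = F x * F' x / (sqrt ((F x)\<^sup>2 - t\<^sup>2) * R)" for x
  have pos: "0 < (F x)\<^sup>2 - t\<^sup>2" if "x \<in> {B t<..<d}" for x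
    using F_gt[OF that] t_pos by (simp add: power_strict_mono)
  have g_deriv: "(g has_real_derivative g' x) (at x)" if x: "x \<in> {B t<..<d}" for x
    using F_deriv[of x] x in_cd pos[OF x] R(1) unfolding g_def g'_def
    by (auto intro!: derivative_eq_intros simp: field_simps)
  have g_mono: "strict_mono_on {B t..d} g"
  proof (rule strict_mono_onI)
    fix x y assume "x \<in> {B t..d}" "y \<in> {B t..d}" "x < y"
    then have "0 \<le> F x" "F x < F y" using F_less_iff in_cd F_ge t_pos by force+
    then have "(F x)\<^sup>2 < (F y)\<^sup>2" by (simp add: power_strict_mono)
    then show "g x < g y" using R(1) unfolding g_def by (simp add: divide_strict_right_mono)
  qed
  have "continuous_on {B t..d} F" using F_cont by (rule continuous_on_subset) (use Bt in auto)
  then have g_cont: "continuous_on {B t..d} g" unfolding g_def using R(1) by (intro continuous_intros) auto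
  have "g (B t) = 0" "g d = 1" using Bt R unfolding g_def R_def by auto
  then have g_image: "g ` {B t<..<d} = {0<..<1}"
    using strict_mono_on_continuous_image_Ioo[OF _ g_cont g_mono] Bt by simp
  show ?thesis
  proof (rule has_integral_substitution_unit_interval[OF g_deriv _ g_image])
    show "inj_on g {B t<..<d}"
      using strict_mono_on_imp_inj_on[OF g_mono] by (rule inj_on_subset) auto
    show "continuous_on {0..1} (branch_integrand (F d) t)"
      using branch_integrand_cont[of "F d"] t by (auto intro: continuous_on_slice)
    fix x assume x: "x \<in> {B t<..<d}"
    have Fx: "0 < F x" "0 < F' x" using F_pos F'_pos in_cd x by auto
    have "(g x)\<^sup>2 = ((F x)\<^sup>2 - t\<^sup>2) / R\<^sup>2"
      using pos[OF x] unfolding g_def by (simp add: power_divide)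
    then have "t\<^sup>2 + ((F d)\<^sup>2 - t\<^sup>2) * (g x)\<^sup>2 = (F x)\<^sup>2"
      unfolding R(2)[symmetric] using R(1) by simp
    then have "branch_integrand (F d) t (g x) = t * R / (F x * F' x)"
      using Fx B_F in_cd x R(3) by (simp add: branch_integrand_def Let_def)
    moreover have "\<bar>g' x\<bar> = g' x" using Fx pos[OF x] R(1) unfolding g'_def by simp
    ultimately show "\<bar>g' x\<bar> * branch_integrand (F d) t (g x) = t / sqrt ((F x)\<^sup>2 - t\<^sup>2)"
      using Fx pos[OF x] R(1) unfolding g'_def by (simp add: field_simps)
  qed
qed

lemma lower_piece_has_integral:
  assumes t: "t \<in> {F c<..<F d}"
  shows "((\<lambda>x. t / sqrt (t\<^sup>2 - (F x)\<^sup>2)) has_integral integral {0..1} (branch_integrand (F c) t))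
           {c..B t}"
proof -
  have t_pos: "0 < t" using t F_c_pos by auto
  have Bt: "B t \<in> {c..d}" "F (B t) = t" using B_in F_B t by auto
  define Q where "Q = sqrt (t\<^sup>2 - (F c)\<^sup>2)"
  have "(F c)\<^sup>2 < t\<^sup>2" using t F_c_pos by (simp add: power_strict_mono)
  then have Q: "0 < Q" "Q\<^sup>2 = t\<^sup>2 - (F c)\<^sup>2" "sqrt \<bar>(F c)\<^sup>2 - t\<^sup>2\<bar> = Q" unfolding Q_def by auto
  have in_cd: "x \<in> {c..d}" if "x \<in> {c..B t}" for x using that Bt by auto
  have F_le: "F x \<le> t" if "x \<in> {c..B t}" for x
    using that F_le_iff[of x "B t"] Bt in_cd by auto
  have F_lt: "F x < t" if "x \<in> {c<..<B t}" for x
    using that less_B_iff[of t x] t in_cd by auto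
  define g where "g x = sqrt (t\<^sup>2 - (F x)\<^sup>2) / Q" for x
  define g' where "g' x = - (F x * F' x) / (sqrt (t\<^sup>2 - (F x)\<^sup>2) * Q)" for x
  have pos: "0 < t\<^sup>2 - (F x)\<^sup>2" if "x \<in> {c<..<B t}" for x
  proof -
    have "0 < F x" using F_pos in_cd that by auto
    then show ?thesis using F_lt[OF that] by (simp add: power_strict_mono)
  qed
  have g_deriv: "(g has_real_derivative g' x) (at x)" if x: "x \<in> {c<..<B t}" for x
    using F_deriv[of x] x in_cd pos[OF x] Q(1) unfolding g_def g'_def
    by (auto intro!: derivative_eq_intros simp: field_simps)
  have g_mono: "strict_antimono_on {c..B t} g"
  proof (rule monotone_onI)
    fix x y assume "x \<in> {c..B t}" "y \<in> {c..B t}" "x < y"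
    then have "0 \<le> F x" "F x < F y" using F_less_iff in_cd F_pos by force+
    then have "(F x)\<^sup>2 < (F y)\<^sup>2" by (simp add: power_strict_mono)
    then show "g y < g x" using Q(1) unfolding g_def by (simp add: divide_strict_right_mono)
  qed
  have "continuous_on {c..B t} F" using F_cont by (rule continuous_on_subset) (use Bt in auto)
  then have g_cont: "continuous_on {c..B t} g" unfolding g_def using Q(1) by (intro continuous_intros) auto
  have "g (B t) = 0" "g c = 1" using Bt Q unfolding g_def Q_def by auto
  then have g_image: "g ` {c<..<B t} = {0<..<1}"
    using strict_antimono_on_continuous_image_Ioo[OF _ g_cont g_mono] Bt by simp
  show ?thesis
  proof (rule has_integral_substitution_unit_interval[OF g_deriv _ g_image])
    show "inj_on g {c<..<B t}"
      using strict_antimono_iff_antimono[THEN iffD1, OF g_mono] by (auto intro: inj_on_subset)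
    show "continuous_on {0..1} (branch_integrand (F c) t)"
      using branch_integrand_cont[of "F c"] t by (auto intro: continuous_on_slice)
    fix x assume x: "x \<in> {c<..<B t}"
    have Fx: "0 < F x" "0 < F' x" using F_pos F'_pos in_cd x by auto
    have "(g x)\<^sup>2 = (t\<^sup>2 - (F x)\<^sup>2) / Q\<^sup>2"
      using pos[OF x] unfolding g_def by (simp add: power_divide)
    then have "t\<^sup>2 + ((F c)\<^sup>2 - t\<^sup>2) * (g x)\<^sup>2 = (F x)\<^sup>2"
      using Q(1) by (simp add: Q(2)[symmetric] minus_diff_eq[symmetric, of "(F c)\<^sup>2"])
    then have "branch_integrand (F c) t (g x) = t * Q / (F x * F' x)"
      using Fx B_F in_cd x Q(3) by (simp add: branch_integrand_def Let_def)
    moreover have "\<bar>g' x\<bar> = - g' x" using Fx pos[OF x] Q(1) unfolding g'_def by simp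
    ultimately show "\<bar>g' x\<bar> * branch_integrand (F c) t (g x) = t / sqrt (t\<^sup>2 - (F x)\<^sup>2)"
      using Fx pos[OF x] Q(1) unfolding g'_def by (simp add: field_simps)
  qed
qed

end

locale single_hump =
  fixes A :: "real \<Rightarrow> real" and Xm Xp x0 :: real
  assumes Xm_less_Xp: "Xm < Xp"
    and nonneg: "\<And>x. 0 \<le> A x"
    and outside: "\<And>x. x \<notin> {Xm<..<Xp} \<Longrightarrow> A x = 0"
    and inside: "\<And>x. x \<in> {Xm<..<Xp} \<Longrightarrow> 0 < A x"
    and cont: "continuous_on UNIV A"
    and deriv: "\<And>x. x \<in> {Xm<..<Xp} \<Longrightarrow> (A has_real_derivative deriv A x) (at x)"
    and deriv_cont: "continuous_on {Xm<..<Xp} (deriv A)"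
    and strict_max: "\<And>x. x \<noteq> x0 \<Longrightarrow> A x < A x0"
    and level_card: "\<And>s. 0 < s \<Longrightarrow> s < A x0 \<Longrightarrow> card {x. A x = s} = 2"
begin

abbreviation "M \<equiv> A x0"
abbreviation "xm \<equiv> xminus A"
abbreviation "xp \<equiv> xplus A"

lemma borel_measurable_A[measurable]: "A \<in> borel_measurable borel"
  using borel_measurable_continuous_onI[OF cont] .

lemma A_le_M: "A x \<le> M"
  using strict_max[of x] by (cases "x = x0") auto

lemma M_pos: "0 < M"
proof -
  have "(Xm + Xp) / 2 \<in> {Xm<..<Xp}" using Xm_less_Xp by auto
  then show ?thesis using inside A_le_M by (meson order.strict_trans2)
qed

lemma x0_inside: "Xm < x0" "x0 < Xp"
  using outside[of x0] M_pos by auto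

lemma IVT_up: "u \<le> v \<Longrightarrow> A u \<le> y \<Longrightarrow> y \<le> A v \<Longrightarrow> \<exists>x\<in>{u..v}. A x = y"
  using IVT'[of A u y v] continuous_on_subset[OF cont] by auto

lemma IVT_down: "u \<le> v \<Longrightarrow> A v \<le> y \<Longrightarrow> y \<le> A u \<Longrightarrow> \<exists>x\<in>{u..v}. A x = y"
  using IVT2'[of A v y u] continuous_on_subset[OF cont] by auto

lemma level_set:
  assumes t: "0 < t" "t < M"
  shows "Xm < xm t" "xm t < x0" "x0 < xp t" "xp t < Xp" "A (xm t) = t" "A (xp t) = t"
    and "{x. A x = t} = {xm t, xp t}"
proof -
  obtain a where a: "a \<in> {Xm..x0}" "A a = t"
    using IVT_up[of Xm x0 t] x0_inside outside[of Xm] t by auto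
  obtain b where b: "b \<in> {x0..Xp}" "A b = t"
    using IVT_down[of x0 Xp t] x0_inside outside[of Xp] t by auto
  have ab: "Xm < a" "a < x0" "x0 < b" "b < Xp"
    using a b t outside[of Xm] outside[of Xp] by (auto simp: order.order_iff_strict)
  have "card {x. A x = t} = 2" using level_card t by simp
  then have "finite {x. A x = t}" by (metis card.infinite zero_neq_numeral)
  moreover have "{a, b} \<subseteq> {x. A x = t}" "card {a, b} = 2" using a b ab by auto
  ultimately have level: "{x. A x = t} = {a, b}"
    using card_subset_eq \<open>card {x. A x = t} = 2\<close> by metis
  then have "xm t = a" "xp t = b"
    unfolding xminus_def xplus_def using ab by (auto simp: min_def max_def)
  then show "Xm < xm t" "xm t < x0" "x0 < xp t" "xp t < Xp" "A (xm t) = t" "A (xp t) = t"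
    "{x. A x = t} = {xm t, xp t}" using ab a b level by auto
qed

lemma A_eq_iff: "0 < t \<Longrightarrow> t < M \<Longrightarrow> A x = t \<longleftrightarrow> x = xm t \<or> x = xp t"
  using level_set(7) by blast

text \<open>Superlevel sets are intervals: by the intermediate value theorem any point outside
  \<open>[xm t, xp t]\<close> (resp. inside) with the wrong value of \<open>A\<close> would produce a third point
  of the level set.\<close>
lemma A_gt_iff:
  assumes t: "0 < t" "t < M"
  shows "t < A x \<longleftrightarrow> xm t < x \<and> x < xp t"
proof
  note L = level_set[OF t]
  assume x: "t < A x"
  then have x_in: "x \<in> {Xm<..<Xp}" using outside[of x] t by fastforce
  show "xm t < x \<and> x < xp t"
  proof (rule ccontr)
    assume "\<not> (xm t < x \<and> x < xp t)"
    then consider "x < xm t" | "xp t < x" using x L by fastforce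
    then show False
    proof cases
      case 1
      obtain y where "y \<in> {Xm..x}" "A y = t"
        using IVT_up[of Xm x t] outside[of Xm] x t x_in by auto
      then show False using A_eq_iff[OF t, of y] 1 L by auto
    next
      case 2
      obtain y where "y \<in> {x..Xp}" "A y = t"
        using IVT_down[of x Xp t] outside[of Xp] x t x_in by auto
      then show False using A_eq_iff[OF t, of y] 2 L by auto
    qed
  qed
next
  note L = level_set[OF t]
  assume x: "xm t < x \<and> x < xp t"
  show "t < A x"
  proof (rule ccontr)
    assume "\<not> t < A x"
    then have "A x < t" using A_eq_iff[OF t, of x] x by fastforce
    then have "\<exists>y \<in> {x..x0} \<union> {x0..x}. A y = t"
      using IVT_up[of x x0 t] IVT_down[of x0 x t] t by (cases "x \<le> x0") auto
    then obtain y where "y \<in> {x..x0} \<union> {x0..x}" "A y = t" by blast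
    then show False using A_eq_iff[OF t, of y] x L by auto
  qed
qed

lemma A_lt_iff:
  assumes "0 < t" "t < M"
  shows "A x < t \<longleftrightarrow> x < xm t \<or> xp t < x"
proof -
  have "xm t < xp t" using level_set[OF assms] by linarith
  moreover have "A x < t \<longleftrightarrow> \<not> t < A x \<and> A x \<noteq> t" by auto
  ultimately show ?thesis using A_gt_iff[OF assms, of x] A_eq_iff[OF assms, of x] by auto
qed

lemma A_strict_mono_on: "strict_mono_on {Xm..x0} A"
proof (rule strict_mono_onI)
  fix y z assume "y \<in> {Xm..x0}" "z \<in> {Xm..x0}" "y < z"
  show "A y < A z"
  proof (cases "z = x0")
    case False
    have "z \<in> {Xm<..<Xp}"
      using \<open>y < z\<close> \<open>y \<in> {Xm..x0}\<close> \<open>z \<in> {Xm..x0}\<close> x0_inside by auto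
    then have t: "0 < A z" "A z < M" using inside strict_max False by auto
    then have "xm (A z) = z"
      using A_eq_iff[OF t, of z] level_set[OF t] False \<open>z \<in> {Xm..x0}\<close> by auto
    then show ?thesis using A_lt_iff[OF t, of y] \<open>y < z\<close> by simp
  qed (use strict_max[of y] \<open>y < z\<close> in simp)
qed

lemma A_strict_antimono_on: "strict_antimono_on {x0..Xp} A"
proof (rule monotone_onI)
  fix y z assume "y \<in> {x0..Xp}" "z \<in> {x0..Xp}" "y < z"
  show "A z < A y"
  proof (cases "y = x0")
    case False
    have "y \<in> {Xm<..<Xp}"
      using \<open>y < z\<close> \<open>y \<in> {x0..Xp}\<close> \<open>z \<in> {x0..Xp}\<close> x0_inside by auto
    then have t: "0 < A y" "A y < M" using inside strict_max False by auto
    then have "xp (A y) = y"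
      using A_eq_iff[OF t, of y] level_set[OF t] False \<open>y \<in> {x0..Xp}\<close> by auto
    then show ?thesis using A_lt_iff[OF t, of z] \<open>y < z\<close> by simp
  qed (use strict_max[of z] \<open>y < z\<close> in simp)
qed

end

context single_hump
begin

definition regular_values :: "real set" where
  "regular_values = {t \<in> {0<..<M}. deriv A (xm t) \<noteq> 0 \<and> deriv A (xp t) \<noteq> 0}"

lemma negligible_critical_values: "negligible ({0<..<M} - regular_values)"
proof -
  define CL where "CL = {x \<in> {Xm<..<x0}. deriv A x = 0}"
  define CR where "CR = {x \<in> {x0<..<Xp}. deriv A x = 0}"
  have dL: "(A has_real_derivative deriv A x) (at x within {Xm<..<x0})" if "x \<in> {Xm<..<x0}" for x
    using deriv[of x] that x0_inside by (auto intro: has_field_derivative_at_within)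
  have iL: "inj_on A {Xm<..<x0}"
    using strict_mono_on_imp_inj_on[OF A_strict_mono_on] by (rule inj_on_subset) auto
  have "negligible (A ` CL)"
    by (rule negligible_image_zero_derivative[OF _ dL iL]) (auto simp: CL_def)
  have dR: "(A has_real_derivative deriv A x) (at x within {x0<..<Xp})" if "x \<in> {x0<..<Xp}" for x
    using deriv[of x] that x0_inside by (auto intro: has_field_derivative_at_within)
  have iR: "inj_on A {x0<..<Xp}"
    using strict_antimono_iff_antimono[THEN iffD1, OF A_strict_antimono_on]
    by (auto intro: inj_on_subset)
  have "negligible (A ` CR)"
    by (rule negligible_image_zero_derivative[OF _ dR iR]) (auto simp: CR_def)
  moreover have "{0<..<M} - regular_values \<subseteq> A ` CL \<union> A ` CR"
  proof
    fix t assume t: "t \<in> {0<..<M} - regular_values"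
    then have "0 < t" "t < M" by auto
    note L = level_set[OF this]
    from t have "deriv A (xm t) = 0 \<or> deriv A (xp t) = 0" unfolding regular_values_def by auto
    then have "xm t \<in> CL \<or> xp t \<in> CR" unfolding CL_def CR_def using L by auto
    then show "t \<in> A ` CL \<union> A ` CR" using L by (metis UnI1 UnI2 image_eqI)
  qed
  ultimately show ?thesis
    using \<open>negligible (A ` CL)\<close> negligible_Un negligible_subset by blast
qed

lemma isCont_deriv: "x \<in> {Xm<..<Xp} \<Longrightarrow> isCont (deriv A) x"
  using deriv_cont continuous_on_eq_continuous_at[of "{Xm<..<Xp}" "deriv A"] by auto

lemma regular_value_left:
  assumes m: "m \<in> regular_values"
  obtains c d where "Xm < c" "c < xm m" "xm m < d" "d < x0" "\<And>x. x \<in> {c..d} \<Longrightarrow> 0 < deriv A x"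
proof -
  have "0 < m" "m < M" using m by (auto simp: regular_values_def)
  note L = level_set[OF this]
  have "0 \<le> deriv A (xm m)"
  proof (rule DERIV_nonneg_if_increasing_right[OF deriv \<open>xm m < x0\<close>])
    show "xm m \<in> {Xm<..<Xp}" using L x0_inside by auto
    fix y assume "xm m < y" "y \<le> x0"
    moreover have "Xm < xm m" "xm m < x0" using L by auto
    ultimately show "A (xm m) < A y"
      by (intro strict_mono_onD[OF A_strict_mono_on]) auto
  qed
  then have "0 < deriv A (xm m)" using m by (auto simp: regular_values_def)
  from isCont_pos_interval[OF isCont_deriv this \<open>Xm < xm m\<close> \<open>xm m < x0\<close>] that show ?thesis
    using L x0_inside by auto
qed

lemma regular_value_right:
  assumes m: "m \<in> regular_values"
  obtains c d where "x0 < c" "c < xp m" "xp m < d" "d < Xp" "\<And>x. x \<in> {c..d} \<Longrightarrow> deriv A x < 0"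
proof -
  have "0 < m" "m < M" using m by (auto simp: regular_values_def)
  note L = level_set[OF this]
  have xp_in: "xp m \<in> {Xm<..<Xp}" using L x0_inside by auto
  have "0 \<le> - deriv A (xp m)"
  proof (rule DERIV_nonneg_if_increasing_right[of "\<lambda>y. A (- y)" _ "- xp m" "- x0"])
    show "((\<lambda>y. A (- y)) has_real_derivative - deriv A (xp m)) (at (- xp m))"
      using deriv[OF xp_in] by (simp add: DERIV_mirror)
    show "- xp m < - x0" using L by simp
    fix y assume "- xp m < y" "y \<le> - x0"
    moreover have "x0 < xp m" "xp m < Xp" using L by auto
    ultimately show "A (- (- xp m)) < A (- y)"
      by (intro monotone_onD[OF A_strict_antimono_on]) auto
  qed
  then have "0 < - deriv A (xp m)" using m by (auto simp: regular_values_def)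
  moreover have "isCont (\<lambda>x. - deriv A x) (xp m)"
    using isCont_deriv[OF xp_in] by (rule isCont_minus)
  ultimately obtain c d where "x0 < c" "c < xp m" "xp m < d" "d < Xp"
    "\<And>x. x \<in> {c..d} \<Longrightarrow> 0 < - deriv A x"
    using isCont_pos_interval[where f="\<lambda>x. - deriv A x" and a="xp m" and L=x0 and R=Xp] L by blast
  then show ?thesis using that by force
qed

end

lemma isCont_if_eq_continuous_on_open:
  assumes "continuous_on N g" "open N" "m \<in> N" "\<And>t. t \<in> N \<Longrightarrow> f t = g t"
  shows "isCont f m"
  using assms continuous_on_cong[of N N f g] continuous_on_eq_continuous_at by metis

context single_hump
begin

lemma continuous_on_phase_integrand:
  assumes "\<And>x. x \<in> {u..v} \<Longrightarrow> \<alpha> \<le> A x"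
  shows "continuous_on ({0<..<\<alpha>} \<times> {u..v}) (\<lambda>(t, x). t / sqrt ((A x)\<^sup>2 - t\<^sup>2))"
proof -
  have "sqrt ((A (snd p))\<^sup>2 - (fst p)\<^sup>2) \<noteq> 0" if "p \<in> {0<..<\<alpha>} \<times> {u..v}" for p
  proof -
    have "0 < fst p" "fst p < A (snd p)" using that assms by force+
    then show ?thesis by (simp add: power_strict_mono)
  qed
  then have "continuous_on ({0<..<\<alpha>} \<times> {u..v}) (\<lambda>p. fst p / sqrt ((A (snd p))\<^sup>2 - (fst p)\<^sup>2))"
    by (intro continuous_intros continuous_on_compose2[OF cont]) auto
  then show ?thesis by (simp add: case_prod_unfold)
qed

lemma continuous_on_tail_integrand:
  assumes "\<And>x. x \<in> {u..v} \<Longrightarrow> A x \<le> \<alpha>"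
  shows "continuous_on ({\<alpha><..} \<times> {u..v}) (\<lambda>(t, x). t / sqrt (t\<^sup>2 - (A x)\<^sup>2))"
proof -
  have "sqrt ((fst p)\<^sup>2 - (A (snd p))\<^sup>2) \<noteq> 0" if "p \<in> {\<alpha><..} \<times> {u..v}" for p
  proof -
    have "A (snd p) < fst p" using that assms by force
    then show ?thesis using nonneg[of "snd p"] by (simp add: power_strict_mono)
  qed
  then have "continuous_on ({\<alpha><..} \<times> {u..v}) (\<lambda>p. fst p / sqrt ((fst p)\<^sup>2 - (A (snd p))\<^sup>2))"
    by (intro continuous_intros continuous_on_compose2[OF cont]) auto
  then show ?thesis by (simp add: case_prod_unfold)
qed

end

locale regular_branches = single_hump +
  fixes c d c' d' :: real
  assumes left_branch: "Xm < c" "c < d" "d < x0"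
    and right_branch: "x0 < c'" "c' < d'" "d' < Xp"
    and deriv_pos: "\<And>x. x \<in> {c..d} \<Longrightarrow> 0 < deriv A x"
    and deriv_neg: "\<And>x. x \<in> {c'..d'} \<Longrightarrow> deriv A x < 0"
begin

sublocale left: increasing_branch A "deriv A" c d
proof
  show "(A has_real_derivative deriv A x) (at x)" if "x \<in> {c..d}" for x
    using deriv[of x] that left_branch x0_inside by auto
  show "continuous_on {c..d} (deriv A)"
    using deriv_cont by (rule continuous_on_subset) (use left_branch x0_inside in auto)
  show "0 < A c" using inside[of c] left_branch x0_inside by auto
qed (use left_branch deriv_pos in auto)

sublocale right: increasing_branch "\<lambda>y. A (- y)" "\<lambda>y. - deriv A (- y)" "- d'" "- c'"
proof
  show "((\<lambda>y. A (- y)) has_real_derivative - deriv A (- y)) (at y)" if "y \<in> {- d'..- c'}" for y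
    using deriv[of "- y"] that right_branch x0_inside by (auto simp: DERIV_mirror)
  have "continuous_on {c'..d'} (deriv A)"
    using deriv_cont by (rule continuous_on_subset) (use right_branch x0_inside in auto)
  then have "continuous_on {- d'..- c'} (\<lambda>y. deriv A (- y))"
    by (rule continuous_on_compose2) (auto intro: continuous_intros)
  then show "continuous_on {- d'..- c'} (\<lambda>y. - deriv A (- y))"
    by (rule continuous_on_minus)
  show "0 < A (- (- d'))" using inside[of d'] right_branch x0_inside by auto
qed (use right_branch deriv_neg in auto)

definition levels :: "real set" where
  "levels = {max (A c) (A d')<..<min (A d) (A c')}"

lemma open_levels: "open levels"
  by (simp add: levels_def)

lemma levels_subset: "levels \<subseteq> {0<..<M}"
  using inside[of c] strict_max[of d] left_branch x0_inside by (auto simp: levels_def)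

lemma xm_levels:
  assumes "t \<in> levels"
  shows "xm t = left.B t" "xm t \<in> {c<..<d}"
proof -
  have t: "0 < t" "t < M" using levels_subset assms by auto
  have "t \<in> {A c<..<A d}" using assms by (auto simp: levels_def)
  then have "left.B t \<in> {c<..<d}" "A (left.B t) = t" using left.B_in_open left.F_B by auto
  then show "xm t = left.B t" "xm t \<in> {c<..<d}"
    using A_eq_iff[OF t, of "left.B t"] level_set[OF t] left_branch by auto
qed

lemma xp_levels:
  assumes "t \<in> levels"
  shows "xp t = - right.B t" "xp t \<in> {c'<..<d'}"
proof -
  have t: "0 < t" "t < M" using levels_subset assms by auto
  have "t \<in> {A d'<..<A c'}" using assms by (auto simp: levels_def)
  then have "right.B t \<in> {- d'<..<- c'}" "A (- right.B t) = t"
    using right.B_in_open right.F_B by auto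
  then show "xp t = - right.B t" "xp t \<in> {c'<..<d'}"
    using A_eq_iff[OF t, of "- right.B t"] level_set[OF t] right_branch by auto
qed

lemma phase_integral_continuous:
  obtains P where "continuous_on levels P"
    "\<And>t. t \<in> levels \<Longrightarrow> ((\<lambda>x. t / sqrt ((A x)\<^sup>2 - t\<^sup>2)) has_integral P t) {xm t..xp t}"
proof -
  define \<mu> where "\<mu> = min (A d) (A c')"
  have "\<mu> \<le> A x" if "x \<in> {d..c'}" for x
  proof (cases "x \<le> x0")
    case True
    then have "A d \<le> A x"
      using strict_mono_onD[OF A_strict_mono_on, of d x] that left_branch
      by (cases "d = x") (auto simp: order.order_iff_strict)
    then show ?thesis by (simp add: \<mu>_def)
  next
    case False
    then have "A c' \<le> A x"
      using monotone_onD[OF A_strict_antimono_on, of x c'] that right_branch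
      by (cases "x = c'") (auto simp: order.order_iff_strict)
    then show ?thesis by (simp add: \<mu>_def)
  qed
  note middle = continuous_on_integral_param[OF continuous_on_phase_integrand[OF this]]
  have levels_mu: "levels \<subseteq> {0<..<\<mu>}" using levels_subset by (auto simp: levels_def \<mu>_def)
  have levels_left: "levels \<subseteq> {A c<..<A d}" and levels_right: "levels \<subseteq> {A d'<..<A c'}"
    by (auto simp: levels_def)
  define P where "P t = integral {0..1} (left.branch_integrand (A d) t)
      + integral {d..c'} (\<lambda>x. t / sqrt ((A x)\<^sup>2 - t\<^sup>2))
      + integral {0..1} (right.branch_integrand (A c') t)" for t
  show ?thesis
  proof (rule that[of P])
    have "continuous_on ({A c<..<A d} \<times> {0..1}) (\<lambda>(t, u). left.branch_integrand (A d) t u)"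
      by (rule left.branch_integrand_cont) simp
    from continuous_on_integral_param(1)[OF this]
    have "continuous_on levels (\<lambda>t. integral {0..1} (left.branch_integrand (A d) t))"
      using levels_left by (rule continuous_on_subset)
    moreover have "continuous_on ({A d'<..<A c'} \<times> {0..1}) (\<lambda>(t, u). right.branch_integrand (A c') t u)"
      using right.branch_integrand_cont[of "A c'"] by simp
    from continuous_on_integral_param(1)[OF this]
    have "continuous_on levels (\<lambda>t. integral {0..1} (right.branch_integrand (A c') t))"
      using levels_right by (rule continuous_on_subset)
    moreover have "continuous_on levels (\<lambda>t. integral {d..c'} (\<lambda>x. t / sqrt ((A x)\<^sup>2 - t\<^sup>2)))"
      using middle(1) levels_mu by (rule continuous_on_subset)
    ultimately show "continuous_on levels P"
      unfolding P_def by (intro continuous_on_add)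
  next
    fix t assume t: "t \<in> levels"
    have "((\<lambda>x. t / sqrt ((A x)\<^sup>2 - t\<^sup>2)) has_integral integral {0..1} (left.branch_integrand (A d) t))
        {xm t..d}"
      using left.upper_piece_has_integral[of t] levels_left t xm_levels[OF t] by auto
    moreover have "((\<lambda>x. t / sqrt ((A x)\<^sup>2 - t\<^sup>2)) has_integral
        integral {d..c'} (\<lambda>x. t / sqrt ((A x)\<^sup>2 - t\<^sup>2))) {d..c'}"
      using middle(2) levels_mu t by auto
    moreover have "((\<lambda>y. t / sqrt ((A (- y))\<^sup>2 - t\<^sup>2)) has_integral
        integral {0..1} (right.branch_integrand (A c') t)) {- xp t..- c'}"
      using right.upper_piece_has_integral[of t] levels_right t xp_levels[OF t] by auto
    then have "((\<lambda>x. t / sqrt ((A x)\<^sup>2 - t\<^sup>2)) has_integral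
        integral {0..1} (right.branch_integrand (A c') t)) {c'..xp t}"
      using has_integral_reflect_real[of "\<lambda>x. t / sqrt ((A x)\<^sup>2 - t\<^sup>2)" _ "xp t" c'] by simp
    moreover have "xm t \<le> d" "d \<le> c'" "c' \<le> xp t"
      using xm_levels[OF t] xp_levels[OF t] left_branch right_branch by auto
    ultimately show "((\<lambda>x. t / sqrt ((A x)\<^sup>2 - t\<^sup>2)) has_integral P t) {xm t..xp t}"
      unfolding P_def by (blast intro: has_integral_combine order_trans)
  qed
qed

lemma left_tail_integral_continuous:
  obtains L where "continuous_on levels L"
    "\<And>t. t \<in> levels \<Longrightarrow> ((\<lambda>x. t / sqrt (t\<^sup>2 - (A x)\<^sup>2)) has_integral L t) {Xm..xm t}"
proof -
  have "A x \<le> A c" if "x \<in> {Xm..c}" for x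
    using strict_mono_onD[OF A_strict_mono_on, of x c] that left_branch
    by (cases "x = c") (auto simp: order.order_iff_strict)
  note outer = continuous_on_integral_param[OF continuous_on_tail_integrand[OF this]]
  have levels_left: "levels \<subseteq> {A c<..<A d}" and levels_outer: "levels \<subseteq> {A c<..}"
    by (auto simp: levels_def)
  define L where "L t = integral {Xm..c} (\<lambda>x. t / sqrt (t\<^sup>2 - (A x)\<^sup>2))
      + integral {0..1} (left.branch_integrand (A c) t)" for t
  show ?thesis
  proof (rule that[of L])
    have "continuous_on ({A c<..<A d} \<times> {0..1}) (\<lambda>(t, u). left.branch_integrand (A c) t u)"
      by (rule left.branch_integrand_cont) simp
    from continuous_on_integral_param(1)[OF this]
    have "continuous_on levels (\<lambda>t. integral {0..1} (left.branch_integrand (A c) t))"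
      using levels_left by (rule continuous_on_subset)
    moreover have "continuous_on levels (\<lambda>t. integral {Xm..c} (\<lambda>x. t / sqrt (t\<^sup>2 - (A x)\<^sup>2)))"
      using outer(1) levels_outer by (rule continuous_on_subset)
    ultimately show "continuous_on levels L"
      unfolding L_def by (intro continuous_on_add)
  next
    fix t assume t: "t \<in> levels"
    have "((\<lambda>x. t / sqrt (t\<^sup>2 - (A x)\<^sup>2)) has_integral
        integral {Xm..c} (\<lambda>x. t / sqrt (t\<^sup>2 - (A x)\<^sup>2))) {Xm..c}"
      using outer(2) levels_outer t by auto
    moreover have "((\<lambda>x. t / sqrt (t\<^sup>2 - (A x)\<^sup>2)) has_integral
        integral {0..1} (left.branch_integrand (A c) t)) {c..xm t}"
      using left.lower_piece_has_integral[of t] levels_left t xm_levels[OF t] by auto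
    moreover have "Xm \<le> c" "c \<le> xm t" using xm_levels[OF t] left_branch by auto
    ultimately show "((\<lambda>x. t / sqrt (t\<^sup>2 - (A x)\<^sup>2)) has_integral L t) {Xm..xm t}"
      unfolding L_def by (blast intro: has_integral_combine)
  qed
qed

lemma right_tail_integral_continuous:
  obtains R where "continuous_on levels R"
    "\<And>t. t \<in> levels \<Longrightarrow> ((\<lambda>x. t / sqrt (t\<^sup>2 - (A x)\<^sup>2)) has_integral R t) {xp t..Xp}"
proof -
  have "A x \<le> A d'" if "x \<in> {d'..Xp}" for x
    using monotone_onD[OF A_strict_antimono_on, of d' x] that right_branch x0_inside
    by (cases "x = d'") (auto simp: order.order_iff_strict)
  note outer = continuous_on_integral_param[OF continuous_on_tail_integrand[OF this]]
  have levels_right: "levels \<subseteq> {A d'<..<A c'}" and levels_outer: "levels \<subseteq> {A d'<..}"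
    by (auto simp: levels_def)
  define R where "R t = integral {0..1} (right.branch_integrand (A d') t)
      + integral {d'..Xp} (\<lambda>x. t / sqrt (t\<^sup>2 - (A x)\<^sup>2))" for t
  show ?thesis
  proof (rule that[of R])
    have "continuous_on ({A d'<..<A c'} \<times> {0..1}) (\<lambda>(t, u). right.branch_integrand (A d') t u)"
      using right.branch_integrand_cont[of "A d'"] by simp
    from continuous_on_integral_param(1)[OF this]
    have "continuous_on levels (\<lambda>t. integral {0..1} (right.branch_integrand (A d') t))"
      using levels_right by (rule continuous_on_subset)
    moreover have "continuous_on levels (\<lambda>t. integral {d'..Xp} (\<lambda>x. t / sqrt (t\<^sup>2 - (A x)\<^sup>2)))"
      using outer(1) levels_outer by (rule continuous_on_subset)
    ultimately show "continuous_on levels R"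
      unfolding R_def by (intro continuous_on_add)
  next
    fix t assume t: "t \<in> levels"
    have "((\<lambda>y. t / sqrt (t\<^sup>2 - (A (- y))\<^sup>2)) has_integral
        integral {0..1} (right.branch_integrand (A d') t)) {- d'..- xp t}"
      using right.lower_piece_has_integral[of t] levels_right t xp_levels[OF t] by auto
    then have "((\<lambda>x. t / sqrt (t\<^sup>2 - (A x)\<^sup>2)) has_integral
        integral {0..1} (right.branch_integrand (A d') t)) {xp t..d'}"
      using has_integral_reflect_real[of "\<lambda>x. t / sqrt (t\<^sup>2 - (A x)\<^sup>2)" _ d' "xp t"] by simp
    moreover have "((\<lambda>x. t / sqrt (t\<^sup>2 - (A x)\<^sup>2)) has_integral
        integral {d'..Xp} (\<lambda>x. t / sqrt (t\<^sup>2 - (A x)\<^sup>2))) {d'..Xp}"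
      using outer(2) levels_outer t by auto
    moreover have "xp t \<le> d'" "d' \<le> Xp" using xp_levels[OF t] right_branch by auto
    ultimately show "((\<lambda>x. t / sqrt (t\<^sup>2 - (A x)\<^sup>2)) has_integral R t) {xp t..Xp}"
      unfolding R_def by (blast intro: has_integral_combine)
  qed
qed

end

context single_hump
begin

text \<open>\<open>phase_density t\<close> and \<open>tail_density a b t\<close> are (up to sign) the derivatives in \<open>t\<close> of
  \<open>Phi A t\<close> and of the tail contribution \<open>\<integral>\<^sub>a\<^sup>b sqrt (t\<^sup>2 - A\<^sup>2)\<^sub>+\<close>; they are defined through
  nonnegative Lebesgue integrals so that Tonelli's theorem applies without integrability
  side conditions (\<open>enn2real\<close> maps the possible value \<open>\<infinity>\<close> to \<open>0\<close>).\<close>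
definition phase_density :: "real \<Rightarrow> real" where
  "phase_density t = enn2real (\<integral>\<^sup>+x. phase_kernel (A x) t \<partial>lborel)"

definition tail_density :: "real \<Rightarrow> real \<Rightarrow> real \<Rightarrow> real" where
  "tail_density a b t = enn2real (\<integral>\<^sup>+x. indicator {a..b} x * tail_kernel (A x) t \<partial>lborel)"

lemma borel_measurable_tail_integrand:
  "(\<lambda>x. indicator {a..b} x * tail_kernel (A x) t) \<in> borel_measurable borel"
  by (intro borel_measurable_times borel_measurable_indicator) (simp, measurable)

lemma phase_density_eq:
  assumes t: "0 < t" "t < M" and P: "((\<lambda>x. t / sqrt ((A x)\<^sup>2 - t\<^sup>2)) has_integral P) {xm t..xp t}"
  shows "phase_density t = P"
  unfolding phase_density_def
proof (rule enn2real_nn_integral_eq)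
  show "(\<lambda>x. phase_kernel (A x) t) \<in> borel_measurable borel" by measurable
  show "0 \<le> phase_kernel (A x) t" for x using t by (simp add: phase_kernel_nonneg)
  have eq: "t / sqrt ((A x)\<^sup>2 - t\<^sup>2) = phase_kernel (A x) t" if "x \<in> {xm t..xp t}" for x
  proof (cases "t < A x")
    case False
    then have "A x = t" using that A_lt_iff[OF t, of x] by auto
    then show ?thesis by (simp add: phase_kernel_def)
  qed (simp add: phase_kernel_def)
  show "((\<lambda>x. phase_kernel (A x) t) has_integral P) {xm t..xp t}"
    by (rule has_integral_eq[OF eq P])
  show "phase_kernel (A x) t = 0" if "x \<notin> {xm t..xp t}" for x
  proof -
    have "\<not> t < A x" using that A_gt_iff[OF t, of x] by force
    then show ?thesis by (simp add: phase_kernel_def)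
  qed
qed

lemma tail_density_left_eq:
  assumes t: "0 < t" "t < M" and P: "((\<lambda>x. t / sqrt (t\<^sup>2 - (A x)\<^sup>2)) has_integral P) {Xm..xm t}"
  shows "tail_density Xm x0 t = P"
  unfolding tail_density_def
proof (rule enn2real_nn_integral_eq)
  note L = level_set[OF t]
  show "(\<lambda>x. indicator {Xm..x0} x * tail_kernel (A x) t) \<in> borel_measurable borel"
    by (rule borel_measurable_tail_integrand)
  show "0 \<le> indicator {Xm..x0} x * tail_kernel (A x) t" for x
    using t nonneg by (simp add: tail_kernel_nonneg)
  have eq: "t / sqrt (t\<^sup>2 - (A x)\<^sup>2) = indicator {Xm..x0} x * tail_kernel (A x) t"
    if "x \<in> {Xm..xm t}" for x
  proof -
    have "x \<in> {Xm..x0}" using that L(1-4) by auto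
    moreover have "\<not> t < A x" using that A_gt_iff[OF t, of x] by auto
    ultimately show ?thesis by (cases "A x = t") (auto simp: tail_kernel_def)
  qed
  show "((\<lambda>x. indicator {Xm..x0} x * tail_kernel (A x) t) has_integral P) {Xm..xm t}"
    by (rule has_integral_eq[OF eq P])
  show "indicator {Xm..x0} x * tail_kernel (A x) t = 0" if "x \<notin> {Xm..xm t}" for x
  proof (cases "x \<in> {Xm..x0}")
    case True
    then have "\<not> A x < t" using that A_lt_iff[OF t, of x] L by force
    then show ?thesis by (simp add: tail_kernel_def)
  qed simp
qed

lemma tail_density_right_eq:
  assumes t: "0 < t" "t < M" and P: "((\<lambda>x. t / sqrt (t\<^sup>2 - (A x)\<^sup>2)) has_integral P) {xp t..Xp}"
  shows "tail_density x0 Xp t = P"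
  unfolding tail_density_def
proof (rule enn2real_nn_integral_eq)
  note L = level_set[OF t]
  show "(\<lambda>x. indicator {x0..Xp} x * tail_kernel (A x) t) \<in> borel_measurable borel"
    by (rule borel_measurable_tail_integrand)
  show "0 \<le> indicator {x0..Xp} x * tail_kernel (A x) t" for x
    using t nonneg by (simp add: tail_kernel_nonneg)
  have eq: "t / sqrt (t\<^sup>2 - (A x)\<^sup>2) = indicator {x0..Xp} x * tail_kernel (A x) t"
    if "x \<in> {xp t..Xp}" for x
  proof -
    have "x \<in> {x0..Xp}" using that L(1-4) by auto
    moreover have "\<not> t < A x" using that A_gt_iff[OF t, of x] by auto
    ultimately show ?thesis by (cases "A x = t") (auto simp: tail_kernel_def)
  qed
  show "((\<lambda>x. indicator {x0..Xp} x * tail_kernel (A x) t) has_integral P) {xp t..Xp}"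
    by (rule has_integral_eq[OF eq P])
  show "indicator {x0..Xp} x * tail_kernel (A x) t = 0" if "x \<notin> {xp t..Xp}" for x
  proof (cases "x \<in> {x0..Xp}")
    case True
    then have "\<not> A x < t" using that A_lt_iff[OF t, of x] L by force
    then show ?thesis by (simp add: tail_kernel_def)
  qed simp
qed

lemma isCont_densities:
  assumes m: "m \<in> regular_values"
  shows "isCont phase_density m" "isCont (tail_density Xm x0) m" "isCont (tail_density x0 Xp) m"
proof -
  obtain c d where cd: "Xm < c" "c < xm m" "xm m < d" "d < x0" "\<And>x. x \<in> {c..d} \<Longrightarrow> 0 < deriv A x"
    using regular_value_left[OF m] by blast
  obtain c' d' where cd': "x0 < c'" "c' < xp m" "xp m < d'" "d' < Xp"
    "\<And>x. x \<in> {c'..d'} \<Longrightarrow> deriv A x < 0"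
    using regular_value_right[OF m] by blast
  interpret regular_branches A Xm Xp x0 c d c' d'
    using cd cd' by unfold_locales auto
  have "0 < m" "m < M" using m by (auto simp: regular_values_def)
  note L = level_set[OF this]
  have "A c < A (xm m)" "A (xm m) < A d"
    by (rule strict_mono_onD[OF A_strict_mono_on]; use cd in auto)+
  moreover have "A d' < A (xp m)" "A (xp m) < A c'"
    by (rule monotone_onD[OF A_strict_antimono_on]; use cd' in auto)+
  ultimately have m_levels: "m \<in> levels" using L by (auto simp: levels_def)
  have t: "0 < t" "t < M" if "t \<in> levels" for t using levels_subset that by auto
  obtain P where P: "continuous_on levels P"
    "\<And>t. t \<in> levels \<Longrightarrow> ((\<lambda>x. t / sqrt ((A x)\<^sup>2 - t\<^sup>2)) has_integral P t) {xm t..xp t}"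
    by (rule phase_integral_continuous) blast
  have "phase_density t = P t" if "t \<in> levels" for t
    using phase_density_eq[OF t[OF that] P(2)[OF that]] .
  then show "isCont phase_density m"
    by (rule isCont_if_eq_continuous_on_open[OF P(1) open_levels m_levels])
  obtain Lt where Lt: "continuous_on levels Lt"
    "\<And>t. t \<in> levels \<Longrightarrow> ((\<lambda>x. t / sqrt (t\<^sup>2 - (A x)\<^sup>2)) has_integral Lt t) {Xm..xm t}"
    by (rule left_tail_integral_continuous) blast
  have "tail_density Xm x0 t = Lt t" if "t \<in> levels" for t
    using tail_density_left_eq[OF t[OF that] Lt(2)[OF that]] .
  then show "isCont (tail_density Xm x0) m"
    by (rule isCont_if_eq_continuous_on_open[OF Lt(1) open_levels m_levels])
  obtain Rt where Rt: "continuous_on levels Rt"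
    "\<And>t. t \<in> levels \<Longrightarrow> ((\<lambda>x. t / sqrt (t\<^sup>2 - (A x)\<^sup>2)) has_integral Rt t) {xp t..Xp}"
    by (rule right_tail_integral_continuous) blast
  have "tail_density x0 Xp t = Rt t" if "t \<in> levels" for t
    using tail_density_right_eq[OF t[OF that] Rt(2)[OF that]] .
  then show "isCont (tail_density x0 Xp) m"
    by (rule isCont_if_eq_continuous_on_open[OF Rt(1) open_levels m_levels])
qed

end

lemma enn2real_nn_integral_divide:
  fixes f :: "real \<Rightarrow> real"
  assumes f: "f \<in> borel_measurable borel" "\<And>x. 0 \<le> f x" and q: "0 \<le> q"
  shows "enn2real (\<integral>\<^sup>+x. f x / q \<partial>lborel) = enn2real (\<integral>\<^sup>+x. f x \<partial>lborel) / q"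
proof -
  have "(\<integral>\<^sup>+x. f x / q \<partial>lborel) = (\<integral>\<^sup>+x. ennreal (f x) * ennreal (1 / q) \<partial>lborel)"
    using f q by (intro nn_integral_cong) (simp add: ennreal_mult[symmetric] divide_inverse)
  also have "\<dots> = (\<integral>\<^sup>+x. f x \<partial>lborel) * ennreal (1 / q)"
    using f(1) by (intro nn_integral_multc) simp
  finally show ?thesis using q by (simp add: enn2real_mult divide_inverse)
qed

lemma has_integral_interval_step:
  fixes f :: "real \<Rightarrow> real"
  assumes "finite E" "u \<le> v" "\<And>x. x \<notin> E \<Longrightarrow> f x = (if x \<in> {u..v} then c else 0)"
  shows "(f has_integral c * (v - u)) UNIV"
proof -
  have "((\<lambda>x. c) has_integral c * (v - u)) {u..v}"
    using has_integral_const_real[of c u v] assms(2) by (simp add: mult.commute)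
  then have step: "((\<lambda>x. if x \<in> {u..v} then c else 0) has_integral c * (v - u)) UNIV"
    by (simp only: has_integral_restrict_UNIV)
  show ?thesis
    by (rule has_integral_spike_finite[OF assms(1) _ step]) (use assms(3) in auto)
qed

context single_hump
begin

definition tail_integral :: "real \<Rightarrow> real \<Rightarrow> real \<Rightarrow> real" where
  "tail_integral a b m = integral {a..b} (\<lambda>x. sqrt (max 0 (m\<^sup>2 - (A x)\<^sup>2)))"

lemma phase_density_has_integral:
  assumes m: "0 < m" "m < M"
  shows "(phase_density has_integral Phi A m) {m..M}"
proof -
  define g where "g x = sqrt (max 0 ((A x)\<^sup>2 - m\<^sup>2))" for x
  have eq: "sqrt ((A x)\<^sup>2 - m\<^sup>2) = g x" if "x \<in> {xm m..xp m}" for x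
  proof -
    have "m \<le> A x" using that A_lt_iff[OF m, of x] by force
    then show ?thesis using m by (simp add: g_def power_mono)
  qed
  have "((\<lambda>x. sqrt ((A x)\<^sup>2 - m\<^sup>2)) has_integral Phi A m) {xm m..xp m}"
    unfolding Phi_def using continuous_on_subset[OF cont]
    by (intro integrable_integral integrable_continuous_real continuous_intros) auto
  with eq have "(g has_integral Phi A m) {xm m..xp m}"
    by (rule has_integral_eq)
  moreover have "g x = 0" if "x \<notin> {xm m..xp m}" for x
  proof -
    have "A x \<le> m" using that A_gt_iff[OF m, of x] by force
    then show ?thesis using nonneg[of x] by (simp add: g_def power_mono)
  qed
  ultimately have outer: "(g has_integral Phi A m) UNIV"
    by (rule has_integral_on_superset) auto
  have inner: "((\<lambda>t. phase_kernel (A x) t) has_integral g x) {m..M}" for x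
    unfolding g_def using m nonneg[of x] A_le_M[of x] by (intro has_integral_phase_kernel) auto
  have "(\<lambda>(x, t). phase_kernel (A x) t) \<in> borel_measurable (lborel \<Otimes>\<^sub>M lborel)"
    by measurable
  from has_integral_swap_nonneg[OF this _ _ inner outer] show ?thesis
    unfolding phase_density_def using m by (auto simp: phase_kernel_nonneg)
qed

lemma tail_density_has_integral:
  assumes m: "0 < m"
  shows "(tail_density a b has_integral tail_integral a b m) {0..m}"
proof -
  define h where "h x = sqrt (max 0 (m\<^sup>2 - (A x)\<^sup>2))" for x
  have "(h has_integral tail_integral a b m) {a..b}"
    unfolding tail_integral_def h_def using continuous_on_subset[OF cont]
    by (intro integrable_integral integrable_continuous_real continuous_intros) auto
  then have "((\<lambda>x. if x \<in> {a..b} then h x else 0) has_integral tail_integral a b m) UNIV"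
    by (simp only: has_integral_restrict_UNIV)
  moreover have "(\<lambda>x. if x \<in> {a..b} then h x else 0) = (\<lambda>x. indicator {a..b} x * h x)"
    by (auto simp: indicator_def)
  ultimately have outer: "((\<lambda>x. indicator {a..b} x * h x) has_integral tail_integral a b m) UNIV"
    by simp
  have inner: "((\<lambda>t. indicator {a..b} x * tail_kernel (A x) t) has_integral indicator {a..b} x * h x)
      {0..m}" for x
    unfolding h_def using has_integral_tail_kernel[OF m nonneg[of x]]
    by (rule has_integral_mult_right)
  have "(\<lambda>(x, t). indicator {a..b} x * tail_kernel (A x) t) \<in> borel_measurable (lborel \<Otimes>\<^sub>M lborel)"
    by measurable
  from has_integral_swap_nonneg[OF this _ _ inner outer] show ?thesis
    unfolding tail_density_def by (auto simp: tail_kernel_nonneg nonneg)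
qed

lemma phase_density_Abel:
  assumes s: "0 < s" "s < M"
  shows "((\<lambda>m. phase_density m / sqrt (m\<^sup>2 - s\<^sup>2)) has_integral pi / 2 * (xp s - xm s)) {s..M}"
proof -
  note L = level_set[OF s]
  have outer: "((\<lambda>x. if s < A x then pi / 2 else 0) has_integral pi / 2 * (xp s - xm s)) UNIV"
  proof (rule has_integral_interval_step[of "{xm s, xp s}"])
    fix x assume "x \<notin> {xm s, xp s}"
    then show "(if s < A x then pi / 2 else 0) = (if x \<in> {xm s..xp s} then pi / 2 else 0)"
      using A_gt_iff[OF s, of x] by auto
  qed (use L in auto)
  have inner: "((\<lambda>m. phase_kernel (A x) m / sqrt (m\<^sup>2 - s\<^sup>2)) has_integral
      (if s < A x then pi / 2 else 0)) {s..M}" for x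
    using s A_le_M[of x] by (intro has_integral_phase_kernel_Abel) auto
  have "(\<lambda>(x, m). phase_kernel (A x) m / sqrt (m\<^sup>2 - s\<^sup>2)) \<in> borel_measurable (lborel \<Otimes>\<^sub>M lborel)"
    by measurable
  from has_integral_swap_nonneg[OF this _ _ inner outer]
  have "((\<lambda>m. enn2real (\<integral>\<^sup>+x. phase_kernel (A x) m / sqrt (m\<^sup>2 - s\<^sup>2) \<partial>lborel)) has_integral
      pi / 2 * (xp s - xm s)) {s..M}"
    using s by (auto simp: phase_kernel_nonneg)
  moreover have "enn2real (\<integral>\<^sup>+x. phase_kernel (A x) m / sqrt (m\<^sup>2 - s\<^sup>2) \<partial>lborel)
      = phase_density m / sqrt (m\<^sup>2 - s\<^sup>2)" if "m \<in> {s..M}" for m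
    unfolding phase_density_def using that s
    by (intro enn2real_nn_integral_divide) (auto simp: phase_kernel_nonneg)
  ultimately show ?thesis
    by (rule has_integral_eq[rotated]) simp
qed

lemma tail_density_Abel:
  assumes s: "0 < s"
    and V: "((\<lambda>x. indicator {a..b} x * (if A x < s then pi / 2 else 0)) has_integral V) UNIV"
  shows "((\<lambda>m. tail_density a b m / sqrt (s\<^sup>2 - m\<^sup>2)) has_integral V) {0..s}"
proof -
  have inner: "((\<lambda>m. indicator {a..b} x * (tail_kernel (A x) m / sqrt (s\<^sup>2 - m\<^sup>2))) has_integral
      indicator {a..b} x * (if A x < s then pi / 2 else 0)) {0..s}" for x
    using has_integral_tail_kernel_Abel[OF nonneg s] by (rule has_integral_mult_right)
  have "(\<lambda>(x, m). indicator {a..b} x * (tail_kernel (A x) m / sqrt (s\<^sup>2 - m\<^sup>2)))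
      \<in> borel_measurable (lborel \<Otimes>\<^sub>M lborel)"
    by measurable
  from has_integral_swap_nonneg[OF this _ _ inner V]
  have "((\<lambda>m. enn2real (\<integral>\<^sup>+x. indicator {a..b} x * (tail_kernel (A x) m / sqrt (s\<^sup>2 - m\<^sup>2)) \<partial>lborel))
      has_integral V) {0..s}"
    using s by (auto simp: tail_kernel_nonneg nonneg)
  moreover have "enn2real (\<integral>\<^sup>+x. indicator {a..b} x * (tail_kernel (A x) m / sqrt (s\<^sup>2 - m\<^sup>2)) \<partial>lborel)
      = tail_density a b m / sqrt (s\<^sup>2 - m\<^sup>2)" if "m \<in> {0..s}" for m
  proof -
    have "enn2real (\<integral>\<^sup>+x. indicator {a..b} x * tail_kernel (A x) m / sqrt (s\<^sup>2 - m\<^sup>2) \<partial>lborel)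
        = tail_density a b m / sqrt (s\<^sup>2 - m\<^sup>2)"
      unfolding tail_density_def using that
      by (intro enn2real_nn_integral_divide borel_measurable_tail_integrand)
         (auto simp: tail_kernel_nonneg nonneg)
    then show ?thesis by (simp add: times_divide_eq_right)
  qed
  ultimately show ?thesis
    by (rule has_integral_eq[rotated]) simp
qed

lemma sublevel_left_has_integral:
  assumes s: "0 < s" "s < M"
  shows "((\<lambda>x. indicator {Xm..x0} x * (if A x < s then pi / 2 else 0)) has_integral
      pi / 2 * (xm s - Xm)) UNIV"
proof (rule has_integral_interval_step[of "{xm s}"])
  fix x assume "x \<notin> {xm s}"
  then show "indicator {Xm..x0} x * (if A x < s then pi / 2 else 0)
      = (if x \<in> {Xm..xm s} then pi / 2 else 0)"
    using A_lt_iff[OF s, of x] level_set[OF s] by (auto simp: indicator_def)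
qed (use level_set[OF s] in auto)

lemma sublevel_right_has_integral:
  assumes s: "0 < s" "s < M"
  shows "((\<lambda>x. indicator {x0..Xp} x * (if A x < s then pi / 2 else 0)) has_integral
      pi / 2 * (Xp - xp s)) UNIV"
proof (rule has_integral_interval_step[of "{xp s}"])
  fix x assume "x \<notin> {xp s}"
  then show "indicator {x0..Xp} x * (if A x < s then pi / 2 else 0)
      = (if x \<in> {xp s..Xp} then pi / 2 else 0)"
    using A_lt_iff[OF s, of x] level_set[OF s] by (auto simp: indicator_def)
qed (use level_set[OF s] in auto)

end

lemma integral_has_real_derivative_at:
  fixes f :: "real \<Rightarrow> real"
  assumes f: "f integrable_on {a..b}" and m: "a < m" "m < b" and c: "isCont f m"
  shows "((\<lambda>u. integral {a..u} f) has_real_derivative f m) (at m)"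
proof -
  have "((\<lambda>u. integral {a..u} f) has_vector_derivative f m) (at m within {a..b})"
    using integral_has_vector_derivative_continuous_at[OF f, of m "{}"] m c
    by (auto intro: continuous_at_imp_continuous_at_within)
  then show ?thesis
    using at_within_Icc_at[OF m] by (simp add: has_real_derivative_iff_has_vector_derivative)
qed

context single_hump
begin

lemma lower_tail_has_integral:
  assumes m: "0 < m" "m < M"
  shows "((\<lambda>x. sqrt (m\<^sup>2 - (A x)\<^sup>2) - m) has_integral tail_integral Xm x0 m - (xm m - Xm) * m)
           {..xm m}"
proof -
  note L = level_set[OF m]
  define h where "h x = sqrt (max 0 (m\<^sup>2 - (A x)\<^sup>2))" for x
  have h_int: "(h has_integral integral {a..b} h) {a..b}" for a b
    unfolding h_def using continuous_on_subset[OF cont]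
    by (intro integrable_integral integrable_continuous_real continuous_intros) auto
  have h0: "h x = 0" if "x \<in> {xm m..x0}" for x
  proof -
    have "m \<le> A x" using that A_lt_iff[OF m, of x] L by force
    then show ?thesis using m by (simp add: h_def power_mono)
  qed
  have "(h has_integral integral {Xm..xm m} h) {Xm..x0}"
    by (rule has_integral_zero_extension[OF h_int _ _ h0]) (use L in auto)
  then have tail: "tail_integral Xm x0 m = integral {Xm..xm m} h"
    unfolding tail_integral_def h_def[symmetric] by (rule integral_unique)
  have "h x - m = sqrt (m\<^sup>2 - (A x)\<^sup>2) - m" if "x \<in> {Xm..xm m}" for x
  proof -
    have "A x \<le> m" using that A_gt_iff[OF m, of x] by force
    then show ?thesis using nonneg[of x] by (simp add: h_def power_mono)
  qed
  moreover have "((\<lambda>x. h x - m) has_integral integral {Xm..xm m} h - (xm m - Xm) * m) {Xm..xm m}"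
    using has_integral_diff[OF h_int has_integral_const_real[of m Xm "xm m"]] L by simp
  ultimately have inside_part: "((\<lambda>x. sqrt (m\<^sup>2 - (A x)\<^sup>2) - m) has_integral
      tail_integral Xm x0 m - (xm m - Xm) * m) {Xm..xm m}"
    unfolding tail by (rule has_integral_eq)
  have "((\<lambda>x. sqrt (m\<^sup>2 - (A x)\<^sup>2) - m) has_integral 0) {..Xm}"
    using outside m by (intro has_integral_is_0) auto
  then have "((\<lambda>x. sqrt (m\<^sup>2 - (A x)\<^sup>2) - m) has_integral
      0 + (tail_integral Xm x0 m - (xm m - Xm) * m)) ({..Xm} \<union> {Xm..xm m})"
    by (rule has_integral_Un[OF _ inside_part])
       (rule negligible_subset[OF negligible_sing[of Xm]], auto)
  moreover have "{..Xm} \<union> {Xm..xm m} = {..xm m}" using L by auto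
  ultimately show ?thesis by simp
qed

lemma upper_tail_has_integral:
  assumes m: "0 < m" "m < M"
  shows "((\<lambda>x. sqrt (m\<^sup>2 - (A x)\<^sup>2) - m) has_integral tail_integral x0 Xp m - (Xp - xp m) * m)
           {xp m..}"
proof -
  note L = level_set[OF m]
  define h where "h x = sqrt (max 0 (m\<^sup>2 - (A x)\<^sup>2))" for x
  have h_int: "(h has_integral integral {a..b} h) {a..b}" for a b
    unfolding h_def using continuous_on_subset[OF cont]
    by (intro integrable_integral integrable_continuous_real continuous_intros) auto
  have h0: "h x = 0" if "x \<in> {x0..xp m}" for x
  proof -
    have "m \<le> A x" using that A_lt_iff[OF m, of x] L by force
    then show ?thesis using m by (simp add: h_def power_mono)
  qed
  have "(h has_integral integral {xp m..Xp} h) {x0..Xp}"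
    by (rule has_integral_zero_extension'[OF h_int _ _ h0]) (use L in auto)
  then have tail: "tail_integral x0 Xp m = integral {xp m..Xp} h"
    unfolding tail_integral_def h_def[symmetric] by (rule integral_unique)
  have "h x - m = sqrt (m\<^sup>2 - (A x)\<^sup>2) - m" if "x \<in> {xp m..Xp}" for x
  proof -
    have "A x \<le> m" using that A_gt_iff[OF m, of x] by force
    then show ?thesis using nonneg[of x] by (simp add: h_def power_mono)
  qed
  moreover have "((\<lambda>x. h x - m) has_integral integral {xp m..Xp} h - (Xp - xp m) * m) {xp m..Xp}"
    using has_integral_diff[OF h_int has_integral_const_real[of m "xp m" Xp]] L by simp
  ultimately have inside_part: "((\<lambda>x. sqrt (m\<^sup>2 - (A x)\<^sup>2) - m) has_integral
      tail_integral x0 Xp m - (Xp - xp m) * m) {xp m..Xp}"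
    unfolding tail by (rule has_integral_eq)
  have "((\<lambda>x. sqrt (m\<^sup>2 - (A x)\<^sup>2) - m) has_integral 0) {Xp..}"
    using outside m by (intro has_integral_is_0) auto
  then have "((\<lambda>x. sqrt (m\<^sup>2 - (A x)\<^sup>2) - m) has_integral
      (tail_integral x0 Xp m - (Xp - xp m) * m) + 0) ({xp m..Xp} \<union> {Xp..})"
    by (rule has_integral_Un[OF inside_part])
       (rule negligible_subset[OF negligible_sing[of Xp]], auto)
  moreover have "{xp m..Xp} \<union> {Xp..} = {xp m..}" using L by auto
  ultimately show ?thesis by simp
qed

lemma Xi_eq_tail_integrals:
  assumes "0 < m" "m < M"
  shows "Xi A m = (Xm + Xp) * m + tail_integral Xm x0 m - tail_integral x0 Xp m"
  using integral_unique[OF lower_tail_has_integral[OF assms]]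
    integral_unique[OF upper_tail_has_integral[OF assms]]
  by (simp add: Xi_def algebra_simps)

lemma Phi_has_real_derivative:
  assumes m: "m \<in> regular_values"
  shows "(Phi A has_real_derivative - phase_density m) (at m)"
proof -
  have m1: "0 < m" "m < M" using m by (auto simp: regular_values_def)
  define m0 where "m0 = m / 2"
  have m0: "0 < m0" "m0 < m" using m1 by (auto simp: m0_def)
  have int: "phase_density integrable_on {m0..M}"
    using phase_density_has_integral[of m0] m0 m1 by auto
  have eq: "Phi A t = integral {m0..M} phase_density - integral {m0..t} phase_density"
    if t: "t \<in> {m0<..<M}" for t
  proof -
    have "Phi A t = integral {t..M} phase_density"
      using integral_unique[OF phase_density_has_integral[of t]] t m0 by simp
    moreover have "integral {m0..t} phase_density + integral {t..M} phase_density
        = integral {m0..M} phase_density"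
      by (rule Henstock_Kurzweil_Integration.integral_combine[OF _ _ int]) (use t in auto)
    ultimately show ?thesis by simp
  qed
  have "((\<lambda>u. integral {m0..u} phase_density) has_real_derivative phase_density m) (at m)"
    by (rule integral_has_real_derivative_at[OF int m0(2) m1(2) isCont_densities(1)[OF m]])
  from DERIV_diff[OF DERIV_const this]
  have "((\<lambda>u. integral {m0..M} phase_density - integral {m0..u} phase_density)
      has_real_derivative - phase_density m) (at m)"
    by simp
  then show ?thesis
    by (rule has_field_derivative_transform_within_open[of _ _ _ "{m0<..<M}"]) (use m0 m1 eq in auto)
qed

lemma Xi_has_real_derivative:
  assumes m: "m \<in> regular_values"
  shows "(Xi A has_real_derivative Xm + Xp + tail_density Xm x0 m - tail_density x0 Xp m) (at m)"
proof -
  have m1: "0 < m" "m < M" using m by (auto simp: regular_values_def)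
  define m1' where "m1' = (m + M) / 2"
  have m1': "m < m1'" "m1' < M" using m1 by (auto simp: m1'_def)
  have int: "tail_density a b integrable_on {0..m1'}" for a b
    using tail_density_has_integral[of m1'] m1 m1' by auto
  have eq: "Xi A t = (Xm + Xp) * t + integral {0..t} (tail_density Xm x0)
      - integral {0..t} (tail_density x0 Xp)" if t: "t \<in> {0<..<m1'}" for t
  proof -
    have "0 < t" "t < M" using t m1' by auto
    then show ?thesis
      using Xi_eq_tail_integrals integral_unique[OF tail_density_has_integral] by simp
  qed
  have "((\<lambda>u. integral {0..u} (tail_density a b)) has_real_derivative tail_density a b m) (at m)"
    if "isCont (tail_density a b) m" for a b
    by (rule integral_has_real_derivative_at[OF int m1(1) m1'(1) that])
  then have "((\<lambda>u. (Xm + Xp) * u + integral {0..u} (tail_density Xm x0)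
      - integral {0..u} (tail_density x0 Xp)) has_real_derivative
      (Xm + Xp) * 1 + tail_density Xm x0 m - tail_density x0 Xp m) (at m)"
    using isCont_densities(2,3)[OF m] by (intro derivative_intros) auto
  then have "((\<lambda>u. (Xm + Xp) * u + integral {0..u} (tail_density Xm x0)
      - integral {0..u} (tail_density x0 Xp)) has_real_derivative
      Xm + Xp + tail_density Xm x0 m - tail_density x0 Xp m) (at m)"
    by simp
  then show ?thesis
    by (rule has_field_derivative_transform_within_open[of _ _ _ "{0<..<m1'}"]) (use m1 m1' eq in auto)
qed

text \<open>Abel's inversion: integrating the derivatives against the Abel kernels and exchanging
  the order of integration, \<open>\<integral>\<^sub>s\<^sup>M Phi'(m) / sqrt (m\<^sup>2 - s\<^sup>2) dm\<close> measures the superlevel set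
  \<open>{A > s} = (xm s, xp s)\<close> and \<open>\<integral>\<^sub>0\<^sup>s Xi'(m) / sqrt (s\<^sup>2 - m\<^sup>2) dm\<close> the sublevel sets
  \<open>[Xm, xm s)\<close> and \<open>(xp s, Xp]\<close>, both with weight \<open>pi / 2\<close>. The derivatives are known only at
  regular values, which is enough since the critical values are negligible.\<close>
lemma Abel_inversion:
  assumes s: "0 < s" "s < M"
  shows "((\<lambda>m. deriv (Xi A) m / sqrt (s\<^sup>2 - m\<^sup>2)) has_integral pi / 2 * (xm s + xp s)) {0..s}"
    and "((\<lambda>m. deriv (Phi A) m / sqrt (m\<^sup>2 - s\<^sup>2)) has_integral - (pi / 2 * (xp s - xm s))) {s..M}"
proof -
  define C where "C = {0<..<M} - regular_values"
  have "negligible C" unfolding C_def by (rule negligible_critical_values)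
  have "((\<lambda>m. (Xm + Xp) * (1 / sqrt (s\<^sup>2 - m\<^sup>2)) + tail_density Xm x0 m / sqrt (s\<^sup>2 - m\<^sup>2)
      - tail_density x0 Xp m / sqrt (s\<^sup>2 - m\<^sup>2)) has_integral
      (Xm + Xp) * (pi / 2) + pi / 2 * (xm s - Xm) - pi / 2 * (Xp - xp s)) {0..s}"
    by (intro has_integral_diff has_integral_add has_integral_mult_right
        has_integral_inverse_sqrt_sq_minus_sq tail_density_Abel
        sublevel_left_has_integral sublevel_right_has_integral s)
  then show "((\<lambda>m. deriv (Xi A) m / sqrt (s\<^sup>2 - m\<^sup>2)) has_integral pi / 2 * (xm s + xp s)) {0..s}"
  proof (rule has_integral_spike[of "C \<union> {0}", rotated 2, THEN has_integral_eq_rhs])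
    show "negligible (C \<union> {0})" using \<open>negligible C\<close> by simp
    fix m assume "m \<in> {0..s} - (C \<union> {0})"
    then have "m \<in> regular_values" using s by (auto simp: C_def)
    from DERIV_imp_deriv[OF Xi_has_real_derivative[OF this]]
    show "deriv (Xi A) m / sqrt (s\<^sup>2 - m\<^sup>2) = (Xm + Xp) * (1 / sqrt (s\<^sup>2 - m\<^sup>2))
        + tail_density Xm x0 m / sqrt (s\<^sup>2 - m\<^sup>2) - tail_density x0 Xp m / sqrt (s\<^sup>2 - m\<^sup>2)"
      by (simp add: diff_divide_distrib add_divide_distrib)
  qed (simp add: field_simps)
  show "((\<lambda>m. deriv (Phi A) m / sqrt (m\<^sup>2 - s\<^sup>2)) has_integral - (pi / 2 * (xp s - xm s))) {s..M}"
  proof (rule has_integral_spike[OF _ _ has_integral_neg[OF phase_density_Abel[OF s]]])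
    show "negligible (C \<union> {M})" using \<open>negligible C\<close> by simp
    fix m assume "m \<in> {s..M} - (C \<union> {M})"
    then have "m \<in> regular_values" using s by (auto simp: C_def)
    from DERIV_imp_deriv[OF Phi_has_real_derivative[OF this]]
    show "deriv (Phi A) m / sqrt (m\<^sup>2 - s\<^sup>2) = - (phase_density m / sqrt (m\<^sup>2 - s\<^sup>2))"
      by simp
  qed
qed

end

lemma single_hump_if_semicircular_KS:
  assumes "semicircular_KS A Xm Xp"
  obtains x0 where "single_hump A Xm Xp x0" "Amax A = A x0"
proof -
  from assms obtain u c x0 where lt: "Xm < Xp" and nonneg: "\<forall>x. 0 \<le> A x"
    and out: "\<forall>x. x \<notin> {Xm..Xp} \<longrightarrow> A x = 0"
    and c: "c > 0" and uA: "\<forall>x\<in>{Xm..Xp}. A x = u x * sqrt ((Xp - x) * (x - Xm)) \<and> c \<le> u x"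
    and cont: "continuous_on UNIV A"
    and d: "\<forall>x\<in>{Xm<..<Xp}. A differentiable (at x) \<and> deriv A differentiable (at x)"
    and x0: "\<forall>x. x \<noteq> x0 \<longrightarrow> A x < A x0"
    and card2: "\<forall>s. 0 < s \<and> s < Amax A \<longrightarrow> card {x. A x = s} = 2"
    unfolding semicircular_KS_def by blast
  have Amax: "Amax A = A x0"
    unfolding Amax_def
  proof (rule cSup_eq_maximum)
    show "y \<le> A x0" if "y \<in> range A" for y
      using that x0 by (cases "y = A x0") (auto intro: less_imp_le)
  qed simp
  have "single_hump A Xm Xp x0"
  proof
    show "A x = 0" if "x \<notin> {Xm<..<Xp}" for x
      using that out uA by (cases "x \<in> {Xm..Xp}") auto
    show "0 < A x" if "x \<in> {Xm<..<Xp}" for x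
    proof -
      have "0 < (Xp - x) * (x - Xm)" using that by simp
      moreover have "c \<le> u x" "A x = u x * sqrt ((Xp - x) * (x - Xm))" using uA that by auto
      ultimately show ?thesis using c by simp
    qed
    show "(A has_real_derivative deriv A x) (at x)" if "x \<in> {Xm<..<Xp}" for x
      using d that by (simp add: DERIV_deriv_iff_real_differentiable)
    show "continuous_on {Xm<..<Xp} (deriv A)"
      using d by (intro continuous_at_imp_continuous_on) (auto intro: differentiable_imp_continuous_within)
    show "card {x. A x = s} = 2" if "0 < s" "s < A x0" for s
      using card2 that Amax by simp
  qed (use lt nonneg cont x0 in auto)
  then show ?thesis using Amax by (rule that)
qed

theorem proposition3:
  fixes A :: "real \<Rightarrow> real" and Xm Xp s :: real
  assumes "semicircular_KS A Xm Xp"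
    and "0 < s" and "s < Amax A"
  shows "(\<lambda>m. deriv (Xi A) m / sqrt (s\<^sup>2 - m\<^sup>2)) integrable_on {0..s}
    \<and> (\<lambda>m. deriv (Phi A) m / sqrt (m\<^sup>2 - s\<^sup>2)) integrable_on {s..Amax A}
    \<and> xplus A s = 1 / pi * integral {0..s} (\<lambda>m. deriv (Xi A) m / sqrt (s\<^sup>2 - m\<^sup>2))
          - 1 / pi * integral {s..Amax A} (\<lambda>m. deriv (Phi A) m / sqrt (m\<^sup>2 - s\<^sup>2))
    \<and> xminus A s = 1 / pi * integral {0..s} (\<lambda>m. deriv (Xi A) m / sqrt (s\<^sup>2 - m\<^sup>2))
          + 1 / pi * integral {s..Amax A} (\<lambda>m. deriv (Phi A) m / sqrt (m\<^sup>2 - s\<^sup>2))"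
proof -
  obtain x0 where hump: "single_hump A Xm Xp x0" and Amax: "Amax A = A x0"
    using single_hump_if_semicircular_KS[OF assms(1)] by blast
  have s: "0 < s" "s < A x0" using assms(2,3) Amax by auto
  note Xi = single_hump.Abel_inversion(1)[OF hump s]
  note Phi = single_hump.Abel_inversion(2)[OF hump s]
  show ?thesis
    unfolding Amax integral_unique[OF Xi] integral_unique[OF Phi]
    using has_integral_integrable[OF Xi] has_integral_integrable[OF Phi]
    by (simp add: field_simps)
qed

end
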